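(* Let $N\geq5$ and let $(M,g)$ be an $N$-dimensional Riemannian model with pole $o$ and metric $ds^2=dr^2+\psi^2(r)\,d\omega^2$, where $\psi$ is a $C^\infty$ nonnegative function on $[0,+\infty)$, positive on $(0,+\infty)$, with $\psi'(0)=1$, $\psi^{(2k)}(0)=0$ for all $k\geq0$, and such that for all $r>0$: $K_{\pi,r}^{rad}\leq -1$ and $K_{\pi,r}^{rad}\geq H_{\pi,r}^{tan}$. Then for all $u\in C_c^\infty(M)$, $$\int_M(\Delta_{r,g}u)^2dv_g-\Big(\frac{N-1}{2}\Big)^4\int_Mu^2dv_g\geq\frac{(N-1)^2}{16}\int_M\frac{u^2}{r^2}dv_g+\frac{(N-1)^3(N-3)}{16}\int_M\frac{u^2}{\psi^2}dv_g+\frac14\int_M\frac1{r^2}\Big(\frac{\partial u}{\partial r}\Big)^2dv_g+\frac{N^2-1}{4}\int_M\frac1{\psi^2}\Big(\frac{\partial u}{\partial r}\Big)^2dv_g.$$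
   Context: $d\omega^2$ is the standard metric on $\mathbb{S}^{N-1}$, $r$ the geodesic distance from $o$, $\frac{\partial u}{\partial r}$ the radial derivative, $dv_g$ the Riemannian volume, $\Delta_{r,g}u=\frac{\partial^2u}{\partial r^2}+(N-1)\frac{\psi'}{\psi}\frac{\partial u}{\partial r}$, $K_{\pi,r}^{rad}=-\frac{\psi''}{\psi}$, $H_{\pi,r}^{tan}=-\frac{(\psi')^2-1}{\psi^2}$. *)

theory Defs
  imports "HOL-Analysis.Analysis"
begin

coinductive cinf :: "(real^'n \<Rightarrow> real) \<Rightarrow> bool" where
  "f differentiable_on UNIV \<Longrightarrow>
   (\<And>i. cinf (\<lambda>x. frechet_derivative f (at x) (axis i 1))) \<Longrightarrow> cinf f"

definition cinf_c :: "(real^'n \<Rightarrow> real) \<Rightarrow> bool" where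
  "cinf_c u \<longleftrightarrow> cinf u \<and> compact (closure {x. u x \<noteq> 0})"

text \<open>psi is C-infinity on [0,+oo) with k-th derivative dpsi k
  (one-sided derivative at 0).\<close>
definition smooth_halfline :: "(nat \<Rightarrow> real \<Rightarrow> real) \<Rightarrow> bool" where
  "smooth_halfline dpsi \<longleftrightarrow>
     (\<forall>k. \<forall>r\<ge>0. (dpsi k has_real_derivative dpsi (Suc k) r) (at r within {0..}))"

text \<open>The model (M,g) is identified with R^N through normal (polar) coordinates
  at the pole o: x = r * omega, r = norm x = geodesic distance to o.\<close>

definition rad_d1 :: "(real^'n \<Rightarrow> real) \<Rightarrow> real^'n \<Rightarrow> real" where
  "rad_d1 u x = deriv (\<lambda>t. u (t *\<^sub>R sgn x)) (norm x)"

definition rad_d2 :: "(real^'n \<Rightarrow> real) \<Rightarrow> real^'n \<Rightarrow> real" where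
  "rad_d2 u x = deriv (deriv (\<lambda>t. u (t *\<^sub>R sgn x))) (norm x)"

definition rad_lap :: "(nat \<Rightarrow> real \<Rightarrow> real) \<Rightarrow> (real^'n \<Rightarrow> real) \<Rightarrow> real^'n \<Rightarrow> real" where
  "rad_lap dpsi u x = rad_d2 u x
     + (real CARD('n) - 1) * dpsi 1 (norm x) / dpsi 0 (norm x) * rad_d1 u x"

text \<open>Integral against the Riemannian volume dv_g = psi(r)^(N-1) dr d omega,
  which in normal coordinates is (psi(|x|)/|x|)^(N-1) dx.\<close>
definition int_g :: "(nat \<Rightarrow> real \<Rightarrow> real) \<Rightarrow> (real^'n \<Rightarrow> real) \<Rightarrow> real" where
  "int_g dpsi F = (\<integral>x. F x * (dpsi 0 (norm x) / norm x) ^ (CARD('n) - 1) \<partial>lborel)"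

end

theory Submission
  imports Defs
begin

(*
  In normal coordinates around the pole, dv_g = (\<psi>(r)/r)^(N-1) dx. Write m = N - 1 and
  a, b, c for u, u_r, u_rr along a ray. Completing squares gives, pointwise,

    \<psi>^m (c + m \<psi>'/\<psi> b)^2 \<ge> \<psi>^m (lower-bound integrands, ((N-1)/2)^4 u^2 included) + (\<alpha> b^2 + \<beta> a^2)'

  with \<alpha> = (\<psi>^m)'/2 + \<psi>^m/(2r) and \<beta> = -(m^2/4) ((\<psi>^m)'/2 - \<psi>^m/(2r)). The remainder is a sum
  of squares plus nonnegative combinations of \<psi>''/\<psi> - 1 and (\<psi>'^2 - 1)/\<psi>^2 - \<psi>''/\<psi>, which are
  exactly the two curvature hypotheses. Dividing by r^m and integrating over R^N, the derivative
  term drops out: against dr d\<omega> it is the integral along rays of the derivative of a function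
  that vanishes at the pole (like r^(m-1)) and outside the support of u.
*)

section \<open>Integrals over Euclidean space\<close>

lemma lborel_integral_scaleR:
  fixes f :: "'a::euclidean_space \<Rightarrow> real"
  assumes c: "c > 0" and f[measurable]: "f \<in> borel_measurable borel"
  shows "integrable lborel (\<lambda>x. f (c *\<^sub>R x)) \<longleftrightarrow> integrable lborel f"
    and "(\<integral>x. f (c *\<^sub>R x) \<partial>lborel) = (\<integral>x. f x \<partial>lborel) / c ^ DIM('a)"
proof -
  let ?S = "distr lborel borel (\<lambda>x::'a. 0 + c *\<^sub>R x)"
  have L: "lborel = density ?S (\<lambda>_. \<bar>c\<bar> ^ DIM('a))"
    using lborel_affine[of c "0::'a"] c by simp
  have m: "(\<lambda>x::'a. 0 + c *\<^sub>R x) \<in> measurable lborel borel" by simp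
  have "integrable lborel f \<longleftrightarrow> integrable ?S (\<lambda>x. \<bar>c\<bar> ^ DIM('a) *\<^sub>R f x)"
    by (subst L, subst integrable_density[symmetric]) (auto simp: ennreal_power)
  also have "\<dots> \<longleftrightarrow> integrable lborel (\<lambda>x. \<bar>c\<bar> ^ DIM('a) *\<^sub>R f (0 + c *\<^sub>R x))"
    by (rule integrable_distr_eq[OF m]) simp
  also have "\<dots> \<longleftrightarrow> integrable lborel (\<lambda>x. f (c *\<^sub>R x))"
    using c by simp
  finally show "integrable lborel (\<lambda>x. f (c *\<^sub>R x)) \<longleftrightarrow> integrable lborel f" by simp
  have "(\<integral>x. f x \<partial>lborel) = (\<integral>x. \<bar>c\<bar> ^ DIM('a) *\<^sub>R f x \<partial>?S)"
    by (subst L, subst integral_density[symmetric]) (auto simp: ennreal_power)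
  also have "\<dots> = (\<integral>x. \<bar>c\<bar> ^ DIM('a) *\<^sub>R f (0 + c *\<^sub>R x) \<partial>lborel)"
    by (rule integral_distr[OF m]) simp
  also have "\<dots> = c ^ DIM('a) * (\<integral>x. f (c *\<^sub>R x) \<partial>lborel)"
    using c by simp
  finally show "(\<integral>x. f (c *\<^sub>R x) \<partial>lborel) = (\<integral>x. f x \<partial>lborel) / c ^ DIM('a)"
    using c by (simp add: field_simps)
qed

lemma exists_dyadic_shell:
  fixes t R :: real
  assumes "t > 0" "t \<le> R"
  shows "\<exists>k::nat. R / 2^(k+1) < t \<and> t \<le> R / 2^k"
proof -
  define P where "P = (\<lambda>k::nat. R / 2^(k+1) < t)"
  have "\<exists>k. P k"
  proof -
    obtain k where "R / t < 2^k" using real_arch_pow[of 2 "R/t"] by auto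
    then have "R / 2^(k+1) < t" using assms by (simp add: field_simps)
    then show ?thesis unfolding P_def by blast
  qed
  define k0 where "k0 = (LEAST k. P k)"
  have P0: "P k0" unfolding k0_def by (rule LeastI_ex) fact
  have "t \<le> R / 2^k0"
  proof (cases k0)
    case 0 then show ?thesis using assms by simp
  next
    case (Suc j)
    then have "\<not> P j" using not_less_Least[of j P] unfolding k0_def by auto
    then show ?thesis unfolding P_def using Suc by simp
  qed
  then show ?thesis using P0 unfolding P_def by blast
qed

lemma summable_dyadic_ball_indicators:
  fixes y :: "'a::real_normed_vector" and c :: "nat \<Rightarrow> real"
  assumes y: "y \<noteq> 0" and R: "R > 0"
  shows "summable (\<lambda>k. c k * indicator (cball 0 (R / 2^k)) y)"
proof -
  obtain K where "R / norm y < 2^K" using real_arch_pow[of 2 "R / norm y"] by auto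
  then have K: "R / 2^K < norm y" using y by (simp add: field_simps)
  have "c k * indicator (cball 0 (R / 2^k)) y = 0" if "k \<notin> {..<K}" for k
  proof -
    have "(2::real)^K \<le> 2^k" using that by (intro power_increasing) auto
    then have "R / 2^k \<le> R / 2^K" using R by (intro divide_left_mono) auto
    then show ?thesis using K by (simp add: indicator_def)
  qed
  then show ?thesis by (intro summable_finite[of "{..<K}"]) auto
qed

lemma inverse_square_le_dyadic_sum:
  fixes y :: "'a::real_normed_vector"
  assumes y: "y \<noteq> 0" "norm y \<le> R"
  shows "1 / (norm y)^2 \<le> (\<Sum>k. 4^(k+1) / R^2 * indicator (cball 0 (R / 2^k)) y)"
proof -
  have ny: "norm y > 0" using y by simp
  then have R: "R > 0" using y by linarith
  obtain k where k: "R / 2^(k+1) < norm y" "norm y \<le> R / 2^k"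
    using exists_dyadic_shell[of "norm y" R] ny y by auto
  have "(R / 2^(k+1))^2 \<le> (norm y)^2" using k R by (intro power_mono) auto
  moreover have "(R / 2^(k+1))^2 = R^2 / 4^(k+1)"
    by (simp add: power_divide power2_eq_square flip: power_mult_distrib)
  ultimately have "R^2 / 4^(k+1) \<le> (norm y)^2" by simp
  then have "1 / (norm y)^2 \<le> 4^(k+1) / R^2" using R ny by (simp add: field_simps)
  also have "\<dots> = 4^(k+1) / R^2 * indicator (cball 0 (R / 2^k)) y"
    using k by (simp add: indicator_def)
  also have "\<dots> \<le> (\<Sum>k. 4^(k+1) / R^2 * indicator (cball 0 (R / 2^k)) y)"
  proof -
    let ?f = "\<lambda>k. 4^(k+1) / R^2 * indicator (cball 0 (R / 2^k)) y :: real"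
    have "sum ?f {k} \<le> suminf ?f"
      by (rule sum_le_suminf[OF summable_dyadic_ball_indicators[OF y(1) R]]) (auto simp: indicator_def)
    then show ?thesis by simp
  qed
  finally show ?thesis .
qed

lemma integrable_dyadic_sum:
  assumes dim: "DIM('a::euclidean_space) \<ge> 3" and R: "R > 0"
  shows "integrable lborel (\<lambda>y::'a. \<Sum>k. 4^(k+1) / R^2 * indicator (cball 0 (R / 2^k)) y)"
proof (rule integrable_suminf)
  define h where "h k y = 4^(k+1) / R^2 * indicator (cball (0::'a) (R / 2^k)) y" for k y
  define V where "V = unit_ball_vol (real DIM('a))"
  show "integrable lborel (h k)" for k
    unfolding h_def
    by (intro integrable_mult_right integrable_real_indicator)
      (use emeasure_bounded_finite[OF bounded_cball[of "0::'a"]] in \<open>auto simp: less_top\<close>)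
  have norm_h: "(\<integral>y. norm (h k y) \<partial>lborel) = 4 * R^(DIM('a) - 2) * V * (4 / 2^DIM('a))^k" for k
  proof -
    have "(\<integral>y. norm (h k y) \<partial>lborel) = (\<integral>y. h k y \<partial>lborel)"
      unfolding h_def by (intro Bochner_Integration.integral_cong) (auto simp: indicator_def)
    also have "\<dots> = 4^(k+1) / R^2 * (V * (R / 2^k) ^ DIM('a))"
      using R unfolding h_def V_def by (simp add: content_cball)
    also have "\<dots> = 4 * R^(DIM('a) - 2) * V * (4 / 2^DIM('a))^k"
    proof -
      have "DIM('a) = 2 + (DIM('a) - 2)" using dim by simp
      then have "R ^ DIM('a) = R^2 * R^(DIM('a) - 2)" by (metis power_add)
      then show ?thesis
        using R by (simp add: power_divide power_mult_distrib field_simps flip: power_mult)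
    qed
    finally show ?thesis .
  qed
  have "(4::real) / 2^DIM('a) < 1"
  proof -
    have "(2::real)^3 \<le> 2^DIM('a)" using dim by (intro power_increasing) auto
    then show ?thesis by simp
  qed
  then show "summable (\<lambda>k. \<integral>y. norm (h k y) \<partial>lborel)"
    unfolding norm_h by (intro summable_mult summable_geometric) simp
  show "AE y in lborel. summable (\<lambda>k. norm (h k y))"
    using AE_lborel_singleton[of "0::'a"]
    by eventually_elim (use R summable_dyadic_ball_indicators in \<open>simp add: h_def\<close>)
qed

lemma integrable_inverse_square_bound:
  fixes f :: "'a::euclidean_space \<Rightarrow> real"
  assumes dim: "DIM('a) \<ge> 3" and [measurable]: "f \<in> borel_measurable borel" and R: "R > 0"
    and bound: "\<And>y. y \<noteq> 0 \<Longrightarrow> norm y \<le> R \<Longrightarrow> \<bar>f y\<bar> \<le> C / (norm y)^2"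
    and supp: "\<And>y. norm y > R \<Longrightarrow> f y = 0"
  shows "integrable lborel f"
proof (rule Bochner_Integration.integrable_bound)
  let ?S = "\<lambda>y::'a. \<Sum>k. 4^(k+1) / R^2 * indicator (cball 0 (R / 2^k)) y"
  show "integrable lborel (\<lambda>y. \<bar>C\<bar> * ?S y)"
    by (intro integrable_mult_right integrable_dyadic_sum dim R)
  show "AE y in lborel. norm (f y) \<le> norm (\<bar>C\<bar> * ?S y)"
    using AE_lborel_singleton[of "0::'a"]
  proof eventually_elim
    case (elim y)
    have S: "?S y \<ge> 0"
      using R by (intro suminf_nonneg summable_dyadic_ball_indicators elim) (auto simp: indicator_def)
    show ?case
    proof (cases "norm y \<le> R")
      case True
      have "\<bar>f y\<bar> \<le> \<bar>C\<bar> / (norm y)^2"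
        using bound[OF elim True] by (smt (verit) divide_right_mono zero_le_power2)
      also have "\<dots> \<le> \<bar>C\<bar> * ?S y"
        using inverse_square_le_dyadic_sum[OF elim True] mult_left_mono[of _ _ "\<bar>C\<bar>"] by fastforce
      finally show ?thesis using S by simp
    qed (use supp S in simp)
  qed
qed simp

lemma power_divide_power_add:
  fixes t :: real
  assumes "t \<noteq> 0"
  shows "c * t ^ a / t ^ (a + k) = c / t ^ k"
  using assms by (simp add: power_add)

lemma integrable_power_bound_divide:
  fixes F :: "'a::euclidean_space \<Rightarrow> real"
  assumes dim: "DIM('a) \<ge> 3" and R: "R > 0" and [measurable]: "F \<in> borel_measurable borel"
    and bound: "\<And>y. y \<noteq> 0 \<Longrightarrow> \<bar>F y\<bar> \<le> C * norm y ^ j"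
    and supp: "\<And>y. norm y > R \<Longrightarrow> F y = 0"
  shows "integrable lborel (\<lambda>y. F y / norm y ^ (j + 2))"
proof (rule integrable_inverse_square_bound[OF dim _ R])
  fix y :: 'a assume y: "y \<noteq> 0" "norm y \<le> R"
  have "\<bar>F y / norm y ^ (j + 2)\<bar> = \<bar>F y\<bar> / norm y ^ (j + 2)"
    by (simp only: abs_divide power_abs abs_norm_cancel)
  also have "\<dots> \<le> C * norm y ^ j / norm y ^ (j + 2)"
    by (rule divide_right_mono[OF bound[OF y(1)]]) simp
  also have "\<dots> = C / (norm y)^2"
    by (rule power_divide_power_add) (use y in simp)
  finally show "\<bar>F y / norm y ^ (j + 2)\<bar> \<le> C / (norm y)^2" .
qed (use supp in auto)

lemma integral_dilation_difference_eq_zero: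
  fixes Q :: "'a::euclidean_space \<Rightarrow> real"
  assumes "c > 0" and [measurable]: "Q \<in> borel_measurable borel" and "integrable lborel Q"
  shows "integrable lborel (\<lambda>y. c ^ DIM('a) * Q (c *\<^sub>R y) - Q y)"
    and "(\<integral>y. c ^ DIM('a) * Q (c *\<^sub>R y) - Q y \<partial>lborel) = 0"
proof -
  have int: "integrable lborel (\<lambda>y. Q (c *\<^sub>R y))"
    using lborel_integral_scaleR(1)[of c Q] assms by simp
  then show "integrable lborel (\<lambda>y. c ^ DIM('a) * Q (c *\<^sub>R y) - Q y)"
    using assms by simp
  show "(\<integral>y. c ^ DIM('a) * Q (c *\<^sub>R y) - Q y \<partial>lborel) = 0"
    using int assms lborel_integral_scaleR(2)[of c Q] by simp
qed

lemma radial_difference_quotient_tendsto: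
  fixes G :: "'a::real_normed_vector \<Rightarrow> real"
  assumes y: "y \<noteq> 0"
    and der: "((\<lambda>s. G (s *\<^sub>R sgn y)) has_real_derivative D) (at (norm y))"
  shows "(\<lambda>k. (G ((1 + 1 / Suc k) *\<^sub>R y) - G y) / (norm y / Suc k)) \<longlonglongrightarrow> D"
proof -
  define t where "t = norm y"
  have t: "t > 0" using y unfolding t_def by simp
  have ty: "t *\<^sub>R sgn y = y" unfolding t_def using y by (simp add: sgn_div_norm)
  have "((\<lambda>h. (G ((t + h) *\<^sub>R sgn y) - G (t *\<^sub>R sgn y)) / h) \<longlongrightarrow> D) (at 0)"
    using der unfolding t_def DERIV_def by simp
  moreover have "filterlim (\<lambda>k. t / Suc k) (at 0) sequentially"
  proof (rule filterlim_atI)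
    show "((\<lambda>k. t / Suc k) \<longlongrightarrow> 0) sequentially"
      using tendsto_mult_right_zero[OF LIMSEQ_inverse_real_of_nat, of t] by (simp add: divide_inverse)
  qed (use t in simp)
  ultimately have "(\<lambda>k. (G ((t + t / Suc k) *\<^sub>R sgn y) - G (t *\<^sub>R sgn y)) / (t / Suc k)) \<longlonglongrightarrow> D"
    by (rule filterlim_compose)
  moreover have "(t + t / Suc k) *\<^sub>R sgn y = (1 + 1 / Suc k) *\<^sub>R (t *\<^sub>R sgn y)" for k
    by (simp add: algebra_simps)
  ultimately show ?thesis unfolding ty by (simp add: t_def)
qed

lemma radial_difference_quotient_bound:
  fixes G D :: "'a::real_normed_vector \<Rightarrow> real"
  assumes y: "y \<noteq> 0" and C: "C \<ge> 0"
    and der: "\<And>s. s > 0 \<Longrightarrow> ((\<lambda>s. G (s *\<^sub>R sgn y)) has_real_derivative D (s *\<^sub>R sgn y)) (at s)"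
    and Db: "\<And>z. z \<noteq> 0 \<Longrightarrow> \<bar>D z\<bar> \<le> C * norm z ^ j"
  shows "\<bar>(G ((1 + 1 / Suc k) *\<^sub>R y) - G y) / (norm y / Suc k)\<bar> \<le> C * (2 * norm y) ^ j"
proof -
  define h where "h = norm y / Suc k"
  have t: "norm y > 0" using y by simp
  have h: "h > 0" "h \<le> norm y" unfolding h_def using t by (auto simp: field_simps)
  have ty: "norm y *\<^sub>R sgn y = y" using y by (simp add: sgn_div_norm)
  have "(norm y + h) *\<^sub>R sgn y = (1 + 1 / Suc k) *\<^sub>R (norm y *\<^sub>R sgn y)"
    unfolding h_def by (simp add: algebra_simps)
  then have arg: "(norm y + h) *\<^sub>R sgn y = (1 + 1 / Suc k) *\<^sub>R y" unfolding ty .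
  obtain z where z: "norm y < z" "z < norm y + h"
    and mvt: "G ((norm y + h) *\<^sub>R sgn y) - G (norm y *\<^sub>R sgn y) = h * D (z *\<^sub>R sgn y)"
    using MVT2[of "norm y" "norm y + h" "\<lambda>s. G (s *\<^sub>R sgn y)" "\<lambda>s. D (s *\<^sub>R sgn y)"] der t h
    by force
  have "\<bar>(G ((1 + 1 / Suc k) *\<^sub>R y) - G y) / (norm y / Suc k)\<bar>
      = \<bar>(G ((norm y + h) *\<^sub>R sgn y) - G (norm y *\<^sub>R sgn y)) / h\<bar>"
    unfolding arg ty unfolding h_def ..
  also have "\<dots> = \<bar>D (z *\<^sub>R sgn y)\<bar>"
    using mvt h by simp
  also have "\<dots> \<le> C * norm (z *\<^sub>R sgn y) ^ j"
    using z t y by (intro Db) (auto simp: sgn_zero_iff)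
  also have "\<dots> \<le> C * (2 * norm y) ^ j"
    using z t h y C by (intro mult_left_mono power_mono) (auto simp: norm_sgn)
  finally show ?thesis .
qed

text \<open>Against \<open>dy / |y|^(N-1)\<close>, i.e. against \<open>dr d\<omega>\<close>, a radial derivative integrates to zero.
  Instead of polar coordinates we use dilations: the quotients \<open>(G(\<lambda>y) - G(y)) / ((\<lambda> - 1) |y|^N)\<close>
  have integral zero because \<open>dy / |y|^N\<close> is dilation invariant, and they converge dominatedly.\<close>

lemma integral_radial_derivative_eq_zero:
  fixes G D :: "'a::euclidean_space \<Rightarrow> real"
  assumes dim: "DIM('a) \<ge> 3" and R: "R > 0" and C: "C \<ge> 0"
    and Gm[measurable]: "G \<in> borel_measurable borel" and Dm[measurable]: "D \<in> borel_measurable borel"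
    and der: "\<And>y t. y \<noteq> 0 \<Longrightarrow> t > 0 \<Longrightarrow>
                ((\<lambda>s. G (s *\<^sub>R sgn y)) has_real_derivative D (t *\<^sub>R sgn y)) (at t)"
    and Gb: "\<And>y. y \<noteq> 0 \<Longrightarrow> \<bar>G y\<bar> \<le> C * norm y ^ (DIM('a) - 2)"
    and Db: "\<And>y. y \<noteq> 0 \<Longrightarrow> \<bar>D y\<bar> \<le> C * norm y ^ (DIM('a) - 3)"
    and supp: "\<And>y. norm y > R \<Longrightarrow> G y = 0 \<and> D y = 0"
  shows "integrable lborel (\<lambda>y. D y / norm y ^ (DIM('a) - 1))"
    and "(\<integral>y. D y / norm y ^ (DIM('a) - 1) \<partial>lborel) = 0"
proof -
  define N where "N = DIM('a)"
  have N: "N - 3 + 2 = N - 1" "N - 2 + 2 = N"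
    using dim unfolding N_def by auto
  have Qm[measurable]: "(\<lambda>y. G y / norm y ^ N) \<in> borel_measurable borel" by measurable
  have Q: "integrable lborel (\<lambda>y. G y / norm y ^ N)"
    using integrable_power_bound_divide[OF dim R Gm Gb[folded N_def]] supp unfolding N(2) by auto
  have "integrable lborel (\<lambda>y. D y / norm y ^ (N - 1))"
    using integrable_power_bound_divide[OF dim R Dm Db[folded N_def]] supp unfolding N(1) by auto
  then show "integrable lborel (\<lambda>y. D y / norm y ^ (DIM('a) - 1))"
    unfolding N_def .
  define lam where "lam k = 1 + 1 / real (Suc k)" for k
  define q where "q k y = real (Suc k) * (G (lam k *\<^sub>R y) - G y) / norm y ^ N" for k y
  have [measurable]: "q k \<in> borel_measurable borel" for k unfolding q_def by simp
  have q_int: "(\<integral>y. q k y \<partial>lborel) = 0" for k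
  proof -
    have lam: "lam k > 0" unfolding lam_def by (simp add: add_pos_pos)
    have "q k y = real (Suc k) * (lam k ^ N * (G (lam k *\<^sub>R y) / norm (lam k *\<^sub>R y) ^ N) - G y / norm y ^ N)"
      for y
      using lam by (cases "y = 0") (simp_all add: q_def N_def power_mult_distrib field_simps)
    then show ?thesis
      using integral_dilation_difference_eq_zero(2)[OF lam Qm Q] by (simp add: N_def)
  qed
  define w where "w y = C * 2 ^ (N - 3) * indicator (cball 0 R) y / (norm y)^2" for y :: 'a
  have [measurable]: "cball (0::'a) R \<in> sets borel" by (rule borel_closed[OF closed_cball])
  have [measurable]: "w \<in> borel_measurable borel" unfolding w_def[abs_def] by measurable
  have w: "integrable lborel w"
    by (rule integrable_inverse_square_bound[OF dim _ R, where C="C * 2 ^ (N - 3)"])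
      (use C in \<open>auto simp: w_def indicator_def\<close>)
  have q_lim: "(\<lambda>k. q k y) \<longlonglongrightarrow> D y / norm y ^ (N - 1)"
    and q_bound: "\<bar>q k y\<bar> \<le> w y" if y: "y \<noteq> 0" for y k
  proof -
    let ?dq = "\<lambda>k. (G ((1 + 1 / Suc k) *\<^sub>R y) - G y) / (norm y / Suc k)"
    have "norm y ^ N = norm y * norm y ^ (N - 1)"
      using dim by (simp flip: power_Suc add: N_def)
    then have split: "q k y = ?dq k * (1 / norm y ^ (N - 1))" for k
      using y by (simp add: q_def lam_def field_simps)
    have "norm y *\<^sub>R sgn y = y" using y by (simp add: sgn_div_norm)
    then have "((\<lambda>s. G (s *\<^sub>R sgn y)) has_real_derivative D y) (at (norm y))"
      using der[OF y, of "norm y"] y by simp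
    then have "(\<lambda>k. ?dq k * (1 / norm y ^ (N - 1))) \<longlonglongrightarrow> D y * (1 / norm y ^ (N - 1))"
      by (intro tendsto_mult_right radial_difference_quotient_tendsto[OF y])
    then show "(\<lambda>k. q k y) \<longlonglongrightarrow> D y / norm y ^ (N - 1)"
      unfolding split by simp
    show "\<bar>q k y\<bar> \<le> w y"
    proof (cases "norm y \<le> R")
      case True
      have "\<bar>q k y\<bar> = \<bar>?dq k\<bar> * (1 / norm y ^ (N - 1))"
        unfolding split by (simp add: abs_mult)
      also have "\<dots> \<le> C * (2 * norm y) ^ (N - 3) * (1 / norm y ^ (N - 1))"
        by (intro mult_right_mono radial_difference_quotient_bound[OF y C der[OF y] Db[folded N_def]])
          simp_all
      also have "\<dots> = C * (2 ^ (N - 3) / (norm y)^2)"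
      proof -
        have "norm y ^ (N - 1) = norm y ^ (N - 3) * (norm y)^2"
          by (metis N(1) power_add)
        then show ?thesis using y by (simp add: power_mult_distrib field_simps)
      qed
      also have "\<dots> = w y"
        using True by (simp add: w_def)
      finally show ?thesis .
    next
      case False
      have "1 \<le> lam k" unfolding lam_def by simp
      then have "norm y \<le> norm (lam k *\<^sub>R y)"
        using mult_right_mono[of 1 "lam k" "norm y"] by simp
      then have "norm (lam k *\<^sub>R y) > R" using False by linarith
      then show ?thesis using False supp[of y] supp[of "lam k *\<^sub>R y"] C by (simp add: q_def w_def)
    qed
  qed
  have "(\<lambda>k. \<integral>y. q k y \<partial>lborel) \<longlonglongrightarrow> (\<integral>y. D y / norm y ^ (N - 1) \<partial>lborel)"
  proof (rule integral_dominated_convergence[OF _ _ w])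
    show "AE y in lborel. (\<lambda>k. q k y) \<longlonglongrightarrow> D y / norm y ^ (N - 1)"
      using AE_lborel_singleton[of "0::'a"] by eventually_elim (use q_lim in auto)
    show "AE y in lborel. norm (q k y) \<le> w y" for k
      using AE_lborel_singleton[of "0::'a"] by eventually_elim (use q_bound in auto)
  qed simp_all
  then show "(\<integral>y. D y / norm y ^ (DIM('a) - 1) \<partial>lborel) = 0"
    unfolding q_int N_def using LIMSEQ_unique tendsto_const by blast
qed

section \<open>Power bounds at the origin\<close>

definition power_bounded :: "real \<Rightarrow> nat \<Rightarrow> ('a::real_normed_vector \<Rightarrow> real) \<Rightarrow> bool" where
  "power_bounded R k f \<longleftrightarrow> (\<exists>K\<ge>0. \<forall>y. y \<noteq> 0 \<longrightarrow> norm y \<le> R \<longrightarrow> \<bar>f y\<bar> \<le> K * norm y ^ k)"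

lemma power_boundedI:
  "K \<ge> 0 \<Longrightarrow> (\<And>y. y \<noteq> 0 \<Longrightarrow> norm y \<le> R \<Longrightarrow> \<bar>f y\<bar> \<le> K * norm y ^ k) \<Longrightarrow> power_bounded R k f"
  unfolding power_bounded_def by blast

lemma power_boundedE:
  assumes "power_bounded R k f"
  obtains K where "K \<ge> 0" "\<And>y. y \<noteq> 0 \<Longrightarrow> norm y \<le> R \<Longrightarrow> \<bar>f y\<bar> \<le> K * norm y ^ k"
  using assms unfolding power_bounded_def by blast

lemma power_bounded_const_bound:
  "K \<ge> 0 \<Longrightarrow> (\<And>y. y \<noteq> 0 \<Longrightarrow> norm y \<le> R \<Longrightarrow> \<bar>f y\<bar> \<le> K) \<Longrightarrow> power_bounded R 0 f"
  by (rule power_boundedI[of K]) auto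

lemma power_bounded_norm: "power_bounded R 1 norm"
  by (rule power_boundedI[of 1]) auto

lemma power_bounded_cong:
  "power_bounded R k f \<Longrightarrow> (\<And>y. y \<noteq> 0 \<Longrightarrow> norm y \<le> R \<Longrightarrow> g y = f y) \<Longrightarrow> power_bounded R k g"
  unfolding power_bounded_def by metis

lemma power_bounded_mult:
  fixes f g :: "'a::real_normed_vector \<Rightarrow> real"
  assumes "power_bounded R j f" "power_bounded R k g"
  shows "power_bounded R (j + k) (\<lambda>y. f y * g y)"
proof -
  obtain K1 where K1: "K1 \<ge> 0" "\<And>y::'a. y \<noteq> 0 \<Longrightarrow> norm y \<le> R \<Longrightarrow> \<bar>f y\<bar> \<le> K1 * norm y ^ j"
    using power_boundedE[OF assms(1)] by blast
  obtain K2 where K2: "K2 \<ge> 0" "\<And>y::'a. y \<noteq> 0 \<Longrightarrow> norm y \<le> R \<Longrightarrow> \<bar>g y\<bar> \<le> K2 * norm y ^ k"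
    using power_boundedE[OF assms(2)] by blast
  show ?thesis
  proof (rule power_boundedI[of "K1 * K2"])
    fix y :: 'a assume y: "y \<noteq> 0" "norm y \<le> R"
    have "\<bar>f y * g y\<bar> \<le> (K1 * norm y ^ j) * (K2 * norm y ^ k)"
      unfolding abs_mult by (rule mult_mono) (use K1 K2 y in auto)
    then show "\<bar>f y * g y\<bar> \<le> K1 * K2 * norm y ^ (j + k)" by (simp add: power_add mult_ac)
  qed (use K1 K2 in simp)
qed

lemma power_bounded_add:
  fixes f g :: "'a::real_normed_vector \<Rightarrow> real"
  assumes "power_bounded R k f" "power_bounded R k g"
  shows "power_bounded R k (\<lambda>y. f y + g y)"
proof -
  obtain K1 where K1: "K1 \<ge> 0" "\<And>y::'a. y \<noteq> 0 \<Longrightarrow> norm y \<le> R \<Longrightarrow> \<bar>f y\<bar> \<le> K1 * norm y ^ k"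
    using power_boundedE[OF assms(1)] by blast
  obtain K2 where K2: "K2 \<ge> 0" "\<And>y::'a. y \<noteq> 0 \<Longrightarrow> norm y \<le> R \<Longrightarrow> \<bar>g y\<bar> \<le> K2 * norm y ^ k"
    using power_boundedE[OF assms(2)] by blast
  show ?thesis
  proof (rule power_boundedI[of "K1 + K2"])
    fix y :: 'a assume y: "y \<noteq> 0" "norm y \<le> R"
    show "\<bar>f y + g y\<bar> \<le> (K1 + K2) * norm y ^ k"
      using K1(2)[OF y] K2(2)[OF y] by (simp add: distrib_right)
  qed (use K1 K2 in simp)
qed

lemma power_bounded_cmult:
  fixes f g :: "'a::real_normed_vector \<Rightarrow> real"
  assumes "power_bounded R k f"
  shows "power_bounded R k (\<lambda>y. c * f y)"
proof -
  obtain K where K: "K \<ge> 0" "\<And>y::'a. y \<noteq> 0 \<Longrightarrow> norm y \<le> R \<Longrightarrow> \<bar>f y\<bar> \<le> K * norm y ^ k"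
    using power_boundedE[OF assms] by blast
  show ?thesis
  proof (rule power_boundedI[of "\<bar>c\<bar> * K"])
    fix y :: 'a assume y: "y \<noteq> 0" "norm y \<le> R"
    show "\<bar>c * f y\<bar> \<le> \<bar>c\<bar> * K * norm y ^ k"
      using mult_left_mono[OF K(2)[OF y], of "\<bar>c\<bar>"] by (simp add: abs_mult mult_ac)
  qed (use K in simp)
qed

lemma power_bounded_diff:
  fixes f g :: "'a::real_normed_vector \<Rightarrow> real"
  assumes "power_bounded R k f" "power_bounded R k g"
  shows "power_bounded R k (\<lambda>y. f y - g y)"
  using power_bounded_add[OF assms(1) power_bounded_cmult[OF assms(2), of "-1"]] by simp

lemma power_bounded_power:
  fixes f g :: "'a::real_normed_vector \<Rightarrow> real"
  assumes "power_bounded R k f"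
  shows "power_bounded R (k * n) (\<lambda>y. f y ^ n)"
proof (induction n)
  case 0 show ?case by (rule power_boundedI[of 1]) auto
next
  case (Suc n)
  have "power_bounded R (k + k * n) (\<lambda>y. f y * f y ^ n)"
    by (rule power_bounded_mult[OF assms Suc.IH])
  then show ?case by (simp add: add.commute)
qed

lemma power_bounded_mono:
  fixes f g :: "'a::real_normed_vector \<Rightarrow> real"
  assumes "power_bounded R j f" "k \<le> j" "R \<ge> 0"
  shows "power_bounded R k f"
proof -
  obtain K where K: "K \<ge> 0" "\<And>y::'a. y \<noteq> 0 \<Longrightarrow> norm y \<le> R \<Longrightarrow> \<bar>f y\<bar> \<le> K * norm y ^ j"
    using power_boundedE[OF assms(1)] by blast
  show ?thesis
  proof (rule power_boundedI[of "K * R ^ (j - k)"])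
    fix y :: 'a assume y: "y \<noteq> 0" "norm y \<le> R"
    have "norm y ^ j = norm y ^ k * norm y ^ (j - k)"
      using assms(2) by (simp flip: power_add)
    also have "\<dots> \<le> norm y ^ k * R ^ (j - k)"
      using y by (intro mult_left_mono power_mono) auto
    finally have "K * norm y ^ j \<le> K * (norm y ^ k * R ^ (j - k))"
      using K by (intro mult_left_mono) auto
    then show "\<bar>f y\<bar> \<le> K * R ^ (j - k) * norm y ^ k"
      using K(2)[OF y] by (simp add: mult_ac)
  qed (use K assms in simp)
qed

lemma power_bounded_divide_norm:
  fixes f g :: "'a::real_normed_vector \<Rightarrow> real"
  assumes "power_bounded R (Suc k) f"
  shows "power_bounded R k (\<lambda>y. f y / norm y)"
proof -
  obtain K where K: "K \<ge> 0" "\<And>y::'a. y \<noteq> 0 \<Longrightarrow> norm y \<le> R \<Longrightarrow> \<bar>f y\<bar> \<le> K * norm y ^ Suc k"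
    using power_boundedE[OF assms] by blast
  show ?thesis
  proof (rule power_boundedI[OF K(1)])
    fix y :: 'a assume y: "y \<noteq> 0" "norm y \<le> R"
    have "\<bar>f y / norm y\<bar> = \<bar>f y\<bar> / norm y" by (simp add: abs_div)
    also have "\<dots> \<le> K * norm y ^ Suc k / norm y"
      using K(2)[OF y] by (intro divide_right_mono) auto
    also have "\<dots> = K * norm y ^ k" using y by simp
    finally show "\<bar>f y / norm y\<bar> \<le> K * norm y ^ k" .
  qed
qed

lemma power_bounded_mult_bounded:
  fixes f g :: "'a::real_normed_vector \<Rightarrow> real"
  assumes "power_bounded R k f" "power_bounded R 0 g"
  shows "power_bounded R k (\<lambda>y. f y * g y)"
  using power_bounded_mult[OF assms] by simp

lemma power_bounded_imp_global_bound:
  fixes f :: "'a::real_normed_vector \<Rightarrow> real"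
  assumes "power_bounded R k f" and "\<And>y. norm y > R \<Longrightarrow> f y = 0"
  obtains C where "C \<ge> 0" "\<And>y. y \<noteq> 0 \<Longrightarrow> \<bar>f y\<bar> \<le> C * norm y ^ k"
proof -
  obtain C where C: "C \<ge> 0" "\<And>y::'a. y \<noteq> 0 \<Longrightarrow> norm y \<le> R \<Longrightarrow> \<bar>f y\<bar> \<le> C * norm y ^ k"
    using power_boundedE[OF assms(1)] by blast
  show ?thesis
  proof (rule that[OF C(1)])
    fix y :: 'a assume "y \<noteq> 0"
    then show "\<bar>f y\<bar> \<le> C * norm y ^ k"
      using C assms(2)[of y] by (cases "norm y \<le> R") auto
  qed
qed

lemma integrable_square_weighted:
  fixes f W :: "'a::euclidean_space \<Rightarrow> real"
  assumes dim: "DIM('a) \<ge> 3" and R: "R > 0"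
    and [measurable]: "f \<in> borel_measurable borel" "W \<in> borel_measurable borel"
    and f: "power_bounded R 0 (\<lambda>y. norm y * f y)" and W: "power_bounded R 0 W"
    and supp: "\<And>y. norm y > R \<Longrightarrow> f y = 0"
  shows "integrable lborel (\<lambda>y. (f y)^2 * W y)"
proof -
  have "power_bounded R 0 (\<lambda>y. (norm y * f y)^2 * W y)"
    using power_bounded_mult[OF power_bounded_power[OF f, of 2] W] by simp
  then obtain K where K: "\<And>y::'a. y \<noteq> 0 \<Longrightarrow> norm y \<le> R \<Longrightarrow> \<bar>(norm y * f y)^2 * W y\<bar> \<le> K * norm y ^ 0"
    unfolding power_bounded_def by blast
  show ?thesis
  proof (rule integrable_inverse_square_bound[OF dim _ R])
    fix y :: 'a assume y: "y \<noteq> 0" "norm y \<le> R"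
    have "(norm y)^2 * \<bar>(f y)^2 * W y\<bar> \<le> K"
      using K[OF y] by (simp add: power_mult_distrib abs_mult mult.assoc)
    then show "\<bar>(f y)^2 * W y\<bar> \<le> K / (norm y)^2"
      using y by (simp add: le_divide_eq mult.commute)
  qed (use supp in auto)
qed

section \<open>The warping function\<close>

locale warping_function =
  fixes dpsi :: "nat \<Rightarrow> real \<Rightarrow> real"
  assumes smooth: "smooth_halfline dpsi"
    and pos: "\<forall>r>0. dpsi 0 r > 0"
    and d1: "dpsi 1 0 = 1"
    and even: "\<forall>k. dpsi (2 * k) 0 = 0"
    and Krad: "\<forall>r>0. - dpsi 2 r / dpsi 0 r \<le> -1"
    and Ktan: "\<forall>r>0. - dpsi 2 r / dpsi 0 r \<ge> - ((dpsi 1 r)\<^sup>2 - 1) / (dpsi 0 r)\<^sup>2"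
begin

lemma psi_has_derivative_within:
  "r \<ge> 0 \<Longrightarrow> (dpsi k has_real_derivative dpsi (Suc k) r) (at r within {0..})"
  using smooth unfolding smooth_halfline_def by auto

lemma psi_has_derivative: "r > 0 \<Longrightarrow> (dpsi k has_real_derivative dpsi (Suc k) r) (at r)"
  using psi_has_derivative_within[of r k] at_within_interior[of r "{0..}"] by simp

lemma psi_continuous_on: "continuous_on {0..} (dpsi k)"
  unfolding continuous_on_eq_continuous_within
  using psi_has_derivative_within DERIV_continuous by blast

lemma borel_measurable_psi_norm [measurable]:
  "(\<lambda>y::'a::euclidean_space. dpsi k (norm y)) \<in> borel_measurable borel"
  by (intro borel_measurable_continuous_onI continuous_on_compose2[OF psi_continuous_on])
    (auto intro: continuous_intros)

lemma psi_0: "dpsi 0 0 = 0"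
  using even[rule_format, of 0] by simp

lemma psi_pos: "r > 0 \<Longrightarrow> dpsi 0 r > 0"
  using pos by auto

lemma psi2_ge_psi: "r > 0 \<Longrightarrow> dpsi 2 r \<ge> dpsi 0 r"
  using Krad[rule_format, of r] psi_pos[of r] by (simp add: divide_le_eq)

lemma psi2_mult_psi_le: "r > 0 \<Longrightarrow> dpsi 2 r * dpsi 0 r \<le> (dpsi 1 r)^2 - 1"
  using Ktan[rule_format, of r] psi_pos[of r]
  by (simp add: divide_le_eq le_divide_eq power2_eq_square)

lemma psi1_ge_1: "r \<ge> 0 \<Longrightarrow> dpsi 1 r \<ge> 1"
proof -
  assume r: "r \<ge> 0"
  have "dpsi 1 0 \<le> dpsi 1 r"
  proof (rule DERIV_nonneg_imp_increasing_open[OF r])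
    fix x :: real assume x: "0 < x" "x < r"
    show "\<exists>y. (dpsi 1 has_real_derivative y) (at x) \<and> 0 \<le> y"
      using psi_has_derivative[of x 1] psi2_ge_psi[of x] psi_pos[of x] x
      by (auto simp: numeral_2_eq_2)
  qed (rule continuous_on_subset[OF psi_continuous_on], auto)
  then show ?thesis using d1 by simp
qed

lemma psi_ge: "r \<ge> 0 \<Longrightarrow> dpsi 0 r \<ge> r"
proof -
  assume r: "r \<ge> 0"
  have "dpsi 0 0 - 0 \<le> dpsi 0 r - r"
  proof (rule DERIV_nonneg_imp_increasing_open[OF r, where f="\<lambda>t. dpsi 0 t - t"])
    fix x :: real assume x: "0 < x" "x < r"
    show "\<exists>y. ((\<lambda>t. dpsi 0 t - t) has_real_derivative y) (at x) \<and> 0 \<le> y"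
      using psi_has_derivative[of x 0] psi1_ge_1[of x] x by (auto intro!: derivative_eq_intros)
  qed (intro continuous_intros continuous_on_subset[OF psi_continuous_on], auto)
  then show ?thesis using psi_0 by simp
qed

lemma psi_local_bounds:
  assumes R: "R > 0"
  obtains M where "M \<ge> 1"
    "\<And>t. 0 \<le> t \<Longrightarrow> t \<le> R \<Longrightarrow> \<bar>dpsi 1 t\<bar> \<le> M \<and> \<bar>dpsi 2 t\<bar> \<le> M \<and> dpsi 0 t \<le> M * t"
proof -
  have "\<exists>M. \<forall>t\<in>{0..R}. \<bar>dpsi k t\<bar> \<le> M" for k
  proof -
    have "compact (dpsi k ` {0..R})"
      by (rule compact_continuous_image)
        (use psi_continuous_on[of k] in \<open>auto intro: continuous_on_subset\<close>)
    then have "bounded (dpsi k ` {0..R})" by (rule compact_imp_bounded)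
    then show ?thesis unfolding bounded_iff by auto
  qed
  then obtain M1 M2 where M1: "\<forall>t\<in>{0..R}. \<bar>dpsi 1 t\<bar> \<le> M1" and M2: "\<forall>t\<in>{0..R}. \<bar>dpsi 2 t\<bar> \<le> M2"
    by meson
  define M where "M = max 1 (max M1 M2)"
  have psi_le: "dpsi 0 t \<le> M * t" if t: "0 \<le> t" "t \<le> R" for t
  proof -
    have "M * 0 - dpsi 0 0 \<le> M * t - dpsi 0 t"
    proof (rule DERIV_nonneg_imp_increasing_open[OF t(1), where f="\<lambda>s. M * s - dpsi 0 s"])
      fix x :: real assume x: "0 < x" "x < t"
      have "\<bar>dpsi 1 x\<bar> \<le> M1" using M1 x t by auto
      then have "dpsi 1 x \<le> M" unfolding M_def by linarith
      then show "\<exists>y. ((\<lambda>s. M * s - dpsi 0 s) has_real_derivative y) (at x) \<and> 0 \<le> y"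
        using psi_has_derivative[of x 0] x by (auto intro!: derivative_eq_intros)
    qed (intro continuous_intros continuous_on_subset[OF psi_continuous_on], auto)
    then show ?thesis using psi_0 by simp
  qed
  show ?thesis
  proof (rule that[of M])
    fix t assume "0 \<le> t" "t \<le> R"
    then show "\<bar>dpsi 1 t\<bar> \<le> M \<and> \<bar>dpsi 2 t\<bar> \<le> M \<and> dpsi 0 t \<le> M * t"
      using M1 M2 psi_le[of t] unfolding M_def by force
  qed (simp add: M_def)
qed

end

section \<open>Smooth compactly supported functions\<close>

lemma cinfD: "cinf f \<Longrightarrow> f differentiable_on UNIV \<and> (\<forall>i. cinf (\<lambda>x. frechet_derivative f (at x) (axis i 1)))"
  by (erule cinf.cases) auto

lemma cinf_differentiable: "cinf f \<Longrightarrow> f differentiable (at x)"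
  using cinfD[of f] unfolding differentiable_on_def by auto

lemma cinf_continuous_on: "cinf f \<Longrightarrow> continuous_on UNIV f"
  using cinfD[of f] differentiable_imp_continuous_on by blast

lemma frechet_derivative_axis_expansion:
  fixes f :: "real^'n \<Rightarrow> real"
  assumes "f differentiable (at z)"
  shows "frechet_derivative f (at z) e = (\<Sum>i\<in>UNIV. e$i * frechet_derivative f (at z) (axis i 1))"
proof -
  have lin: "linear (frechet_derivative f (at z))" using linear_frechet_derivative[OF assms] .
  have "frechet_derivative f (at z) e = frechet_derivative f (at z) (\<Sum>i\<in>UNIV. e$i *\<^sub>R axis i 1)"
    using basis_expansion[of e] by (simp add: scalar_mult_eq_scaleR)
  also have "\<dots> = (\<Sum>i\<in>UNIV. e$i * frechet_derivative f (at z) (axis i 1))"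
    using lin by (simp add: linear_sum linear_scale)
  finally show ?thesis .
qed

lemma cinf_ray_has_derivative:
  fixes f :: "real^'n \<Rightarrow> real"
  assumes "cinf f"
  shows "((\<lambda>s. f (s *\<^sub>R e)) has_real_derivative
           (\<Sum>i\<in>UNIV. e$i * frechet_derivative f (at (t *\<^sub>R e)) (axis i 1))) (at t)"
proof -
  have d: "f differentiable (at (t *\<^sub>R e))" using cinf_differentiable[OF assms] .
  have fd: "(f has_derivative frechet_derivative f (at (t *\<^sub>R e))) (at (t *\<^sub>R e))"
    using d frechet_derivative_works by blast
  have lin: "linear (frechet_derivative f (at (t *\<^sub>R e)))" using linear_frechet_derivative[OF d] .
  have "((\<lambda>s. s *\<^sub>R e) has_derivative (\<lambda>h. h *\<^sub>R e)) (at t)"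
    by (auto intro!: derivative_eq_intros)
  from has_derivative_compose[OF this fd]
  have "((\<lambda>s. f (s *\<^sub>R e)) has_derivative (\<lambda>h. frechet_derivative f (at (t *\<^sub>R e)) (h *\<^sub>R e))) (at t)"
    by (simp add: o_def)
  moreover have "(\<lambda>h. frechet_derivative f (at (t *\<^sub>R e)) (h *\<^sub>R e))
      = (\<lambda>h. frechet_derivative f (at (t *\<^sub>R e)) e * h)"
    using lin by (simp add: linear_scale mult.commute)
  ultimately show ?thesis
    using frechet_derivative_axis_expansion[OF d, of e] by (simp add: has_field_derivative_def)
qed

lemma frechet_derivative_eq_0_on_open:
  fixes f :: "real^'n \<Rightarrow> real"
  assumes "f differentiable (at y)" "open S" "y \<in> S" "\<And>z. z \<in> S \<Longrightarrow> f z = 0"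
  shows "frechet_derivative f (at y) h = 0"
proof -
  have "(f has_derivative (\<lambda>h. 0)) (at y)"
    by (rule has_derivative_transform_within_open[OF _ assms(2,3), of "\<lambda>z. 0"]) (use assms(4) in auto)
  then show ?thesis using frechet_derivative_at by metis
qed

lemma abs_sum_component_mult_le:
  fixes e :: "real^'n"
  assumes "norm e \<le> 1"
  shows "\<bar>\<Sum>i\<in>UNIV. e$i * a i\<bar> \<le> (\<Sum>i\<in>UNIV. \<bar>a i\<bar>)"
proof -
  have "\<bar>\<Sum>i\<in>UNIV. e$i * a i\<bar> \<le> (\<Sum>i\<in>UNIV. \<bar>e$i * a i\<bar>)" by (rule sum_abs)
  also have "\<dots> \<le> (\<Sum>i\<in>UNIV. \<bar>a i\<bar>)"
  proof (rule sum_mono)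
    fix i
    have "\<bar>e$i\<bar> \<le> 1" using component_le_norm_cart[of e i] assms by linarith
    then show "\<bar>e$i * a i\<bar> \<le> \<bar>a i\<bar>" by (simp add: abs_mult mult_left_le_one_le)
  qed
  finally show ?thesis .
qed

locale test_function =
  fixes u :: "real^'n \<Rightarrow> real"
  assumes cinf_c: "cinf_c u"
begin

definition du :: "'n \<Rightarrow> real^'n \<Rightarrow> real" where
  "du i = (\<lambda>z. frechet_derivative u (at z) (axis i 1))"

definition ddu :: "'n \<Rightarrow> 'n \<Rightarrow> real^'n \<Rightarrow> real" where
  "ddu i j = (\<lambda>z. frechet_derivative (du i) (at z) (axis j 1))"

lemma cinf_u: "cinf u" using cinf_c unfolding cinf_c_def by simp
lemma cinf_du: "cinf (du i)" using cinfD[OF cinf_u] unfolding du_def by blast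
lemma cinf_ddu: "cinf (ddu i j)" using cinfD[OF cinf_du[of i]] unfolding ddu_def by blast

definition ray_d1 :: "real^'n \<Rightarrow> real \<Rightarrow> real" where
  "ray_d1 e t = (\<Sum>i\<in>UNIV. e$i * du i (t *\<^sub>R e))"

definition ray_d2 :: "real^'n \<Rightarrow> real \<Rightarrow> real" where
  "ray_d2 e t = (\<Sum>i\<in>UNIV. e$i * (\<Sum>j\<in>UNIV. e$j * ddu i j (t *\<^sub>R e)))"

lemma ray_has_derivative: "((\<lambda>s. u (s *\<^sub>R e)) has_real_derivative ray_d1 e t) (at t)"
  using cinf_ray_has_derivative[OF cinf_u, of e t] unfolding ray_d1_def du_def .

lemma ray_d1_has_derivative: "(ray_d1 e has_real_derivative ray_d2 e t) (at t)"
  unfolding ray_d1_def[abs_def] ray_d2_def ddu_def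
  by (intro DERIV_sum DERIV_cmult cinf_ray_has_derivative[OF cinf_du])

lemma deriv_ray: "deriv (\<lambda>s. u (s *\<^sub>R e)) = ray_d1 e"
  using ray_has_derivative DERIV_imp_deriv by blast

lemma deriv_ray_d1: "deriv (ray_d1 e) = ray_d2 e"
  using ray_d1_has_derivative DERIV_imp_deriv by blast

lemma rad_d1_eq: "rad_d1 u y = ray_d1 (sgn y) (norm y)"
  unfolding rad_d1_def deriv_ray ..

lemma rad_d2_eq: "rad_d2 u y = ray_d2 (sgn y) (norm y)"
  unfolding rad_d2_def deriv_ray deriv_ray_d1 ..

lemma rad_d1_scaleR: "t > 0 \<Longrightarrow> norm e = 1 \<Longrightarrow> rad_d1 u (t *\<^sub>R e) = ray_d1 e t"
  and rad_d2_scaleR: "t > 0 \<Longrightarrow> norm e = 1 \<Longrightarrow> rad_d2 u (t *\<^sub>R e) = ray_d2 e t"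
  by (simp_all add: rad_d1_eq rad_d2_eq sgn_scaleR sgn_div_norm)

lemma norm_scaleR_sgn: "norm y *\<^sub>R sgn y = y"
  by (cases "y = 0") (simp_all add: sgn_div_norm)

lemma rad_d1_sum: "rad_d1 u y = (\<Sum>i\<in>UNIV. (sgn y)$i * du i y)"
  unfolding rad_d1_eq ray_d1_def norm_scaleR_sgn ..

lemma rad_d2_sum: "rad_d2 u y = (\<Sum>i\<in>UNIV. (sgn y)$i * (\<Sum>j\<in>UNIV. (sgn y)$j * ddu i j y))"
  unfolding rad_d2_eq ray_d2_def norm_scaleR_sgn ..

lemma borel_measurable_u [measurable]: "u \<in> borel_measurable borel"
  by (rule borel_measurable_continuous_onI[OF cinf_continuous_on[OF cinf_u]])

lemma borel_measurable_du [measurable]: "du i \<in> borel_measurable borel"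
  by (rule borel_measurable_continuous_onI[OF cinf_continuous_on[OF cinf_du]])

lemma borel_measurable_ddu [measurable]: "ddu i j \<in> borel_measurable borel"
  by (rule borel_measurable_continuous_onI[OF cinf_continuous_on[OF cinf_ddu]])

lemma borel_measurable_sgn_nth [measurable]: "(\<lambda>x::real^'n. sgn x $ i) \<in> borel_measurable borel"
  by (intro measurable_compose[OF borel_measurable_sgn] borel_measurable_continuous_onI continuous_intros)

lemma borel_measurable_rad_d1 [measurable]: "rad_d1 u \<in> borel_measurable borel"
  unfolding rad_d1_sum[abs_def] by measurable

lemma borel_measurable_rad_d2 [measurable]: "rad_d2 u \<in> borel_measurable borel"
  unfolding rad_d2_sum[abs_def] by measurable

lemma support_derivatives:
  obtains R where "R > 0"
    "\<And>y. norm y > R \<Longrightarrow> u y = 0 \<and> (\<forall>i. du i y = 0) \<and> (\<forall>i j. ddu i j y = 0)"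
proof -
  have "bounded (closure {x. u x \<noteq> 0})"
    using cinf_c unfolding cinf_c_def by (simp add: compact_imp_bounded)
  then obtain B where B: "\<And>x. x \<in> closure {x. u x \<noteq> 0} \<Longrightarrow> norm x \<le> B"
    unfolding bounded_iff by blast
  define R where "R = max B 1"
  have R: "R > 0" "\<And>y. norm y > R \<Longrightarrow> u y = 0"
    using B closure_subset[of "{x. u x \<noteq> 0}"] unfolding R_def by force+
  have o: "open {z::real^'n. norm z > R}" by (intro open_Collect_less continuous_intros)
  have du0: "du i y = 0" if "norm y > R" for i y
    unfolding du_def
    by (rule frechet_derivative_eq_0_on_open[OF cinf_differentiable[OF cinf_u] o]) (use that R in auto)
  have "ddu i j y = 0" if "norm y > R" for i j y
    unfolding ddu_def
    by (rule frechet_derivative_eq_0_on_open[OF cinf_differentiable[OF cinf_du] o]) (use that du0 in auto)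
  then show ?thesis using that R du0 by blast
qed

lemma radial_derivatives_bounded:
  obtains R B where "R > 0" "B \<ge> 0"
    "\<And>y. norm y > R \<Longrightarrow> u y = 0 \<and> rad_d1 u y = 0 \<and> rad_d2 u y = 0"
    "\<And>y. \<bar>u y\<bar> \<le> B \<and> \<bar>rad_d1 u y\<bar> \<le> B \<and> \<bar>rad_d2 u y\<bar> \<le> B"
proof -
  obtain R where R: "R > 0" "\<And>y. norm y > R \<Longrightarrow> u y = 0 \<and> (\<forall>i. du i y = 0) \<and> (\<forall>i j. ddu i j y = 0)"
    using support_derivatives by blast
  define H where "H y = \<bar>u y\<bar> + (\<Sum>i\<in>UNIV. \<bar>du i y\<bar>) + (\<Sum>i\<in>UNIV. \<Sum>j\<in>UNIV. \<bar>ddu i j y\<bar>)" for y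
  have "continuous_on (cball 0 R) H"
    unfolding H_def using cinf_u cinf_du cinf_ddu
    by (intro continuous_intros continuous_on_subset[OF cinf_continuous_on]) auto
  then have "bounded (H ` cball 0 R)"
    by (intro compact_imp_bounded compact_continuous_image compact_cball)
  then obtain B where B: "\<forall>y\<in>cball 0 R. \<bar>H y\<bar> \<le> B"
    unfolding bounded_iff by fastforce
  have ns: "norm (sgn y) \<le> 1" for y :: "real^'n" by (simp add: norm_sgn)
  have d1: "\<bar>rad_d1 u y\<bar> \<le> (\<Sum>i\<in>UNIV. \<bar>du i y\<bar>)" for y
    unfolding rad_d1_sum by (rule abs_sum_component_mult_le[OF ns])
  have d2: "\<bar>rad_d2 u y\<bar> \<le> (\<Sum>i\<in>UNIV. \<Sum>j\<in>UNIV. \<bar>ddu i j y\<bar>)" for y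
    unfolding rad_d2_sum
    by (rule order_trans[OF abs_sum_component_mult_le[OF ns]])
      (intro sum_mono abs_sum_component_mult_le[OF ns])
  show ?thesis
  proof (rule that[of R "max B 0"])
    fix y :: "real^'n"
    show "norm y > R \<Longrightarrow> u y = 0 \<and> rad_d1 u y = 0 \<and> rad_d2 u y = 0"
      using R(2)[of y] unfolding rad_d1_sum rad_d2_sum by simp
    show "\<bar>u y\<bar> \<le> max B 0 \<and> \<bar>rad_d1 u y\<bar> \<le> max B 0 \<and> \<bar>rad_d2 u y\<bar> \<le> max B 0"
    proof (cases "norm y > R")
      case True then show ?thesis using R(2)[of y] unfolding rad_d1_sum rad_d2_sum by simp
    next
      case False
      then have "\<bar>H y\<bar> \<le> B" using B by auto
      moreover have "0 \<le> (\<Sum>i\<in>UNIV. \<bar>du i y\<bar>)" "0 \<le> (\<Sum>i\<in>UNIV. \<Sum>j\<in>UNIV. \<bar>ddu i j y\<bar>)"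
        by (auto intro: sum_nonneg)
      ultimately show ?thesis using d1[of y] d2[of y] unfolding H_def by linarith
    qed
  qed (use R in auto)
qed

end

section \<open>The pointwise inequality\<close>

text \<open>Here \<open>w = \<psi>\<^sup>m\<close>, \<open>ip = 1/\<psi>\<close>, \<open>ir = 1/r\<close> and \<open>a, b, c\<close> stand for \<open>u, u\<^sub>r, u\<^sub>r\<^sub>r\<close>; the left-hand
  side is \<open>r\<^sup>m\<close> times the difference of the two sides of \<open>completed_square_inequality\<close>.\<close>

lemma completed_square_identity:
  fixes p1 p2 a b c mm w ip ir :: real
  shows "(c + mm*p1*ip*b)^2*w - (mm/2)^4*a^2*w
          - (mm^2/16*(a^2*ir^2) + mm^3*(mm-2)/16*(a^2*ip^2) + 1/4*(b^2*ir^2) + ((mm+1)^2-1)/4*(b^2*ip^2))*w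
          - (((mm/2)*(p2*(w*ip) + (mm-1)*p1^2*(w*ip^2)) + mm*p1*(w*ip)*ir/2 - w*ir^2/2)*b^2
             + 2*((mm/2)*p1*(w*ip) + w*ir/2)*b*c
             + (-(mm^2/4)*((mm/2)*(p2*(w*ip) + (mm-1)*p1^2*(w*ip^2)) - mm*p1*(w*ip)*ir/2 + w*ir^2/2))*a^2
             + 2*(-(mm^2/4)*((mm/2)*p1*(w*ip) - w*ir/2))*a*b)
         = w*((c+((mm/2)*p1*ip - ir/2)*b)^2 + (mm^2/4)*(b+((mm/2)*p1*ip - ir/2)*a)^2
             + mm*b^2*((p1^2 - 1)*ip^2 - p2*ip)
             + b^2*((mm/2)*(p2*ip - 1) + mm*(mm-2)/4*((p1^2 - 1)*ip^2 - 1))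
             + (mm^2/4)*a^2*((mm/2)*(p2*ip - 1) + mm*(mm-2)/4*((p1^2 - 1)*ip^2 - 1)))"
  by (simp add: field_simps) algebra

lemma curvature_remainders_nonneg:
  fixes p p1 p2 :: real
  assumes p: "p > 0" and Krad: "p2 \<ge> p" and Ktan: "p2 * p \<le> p1^2 - 1"
  shows "(p1^2 - 1) * (inverse p)^2 - p2 * inverse p \<ge> 0"
    and "p2 * inverse p - 1 \<ge> 0"
    and "(p1^2 - 1) * (inverse p)^2 - 1 \<ge> 0"
proof -
  have "(p1^2 - 1) * (inverse p)^2 - p2 * inverse p = (p1^2 - 1 - p2 * p) * (inverse p)^2"
    using p by (simp add: field_simps power2_eq_square)
  then show "(p1^2 - 1) * (inverse p)^2 - p2 * inverse p \<ge> 0"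
    using Ktan by simp
  show "p2 * inverse p - 1 \<ge> 0"
    using Krad p by (simp add: field_simps)
  have "(p1^2 - 1) * (inverse p)^2 - 1 = (p1^2 - 1 - p^2) * (inverse p)^2"
    using p by (simp add: field_simps power2_eq_square)
  moreover have "p^2 \<le> p2 * p" using Krad p by (simp add: power2_eq_square)
  ultimately show "(p1^2 - 1) * (inverse p)^2 - 1 \<ge> 0" using Ktan by simp
qed

lemma completed_square_inequality:
  fixes r p p1 p2 a b c :: real and n :: nat
  assumes r: "r > 0" and p: "p > 0" and n: "n \<ge> 3" and Krad: "p2 \<ge> p" and Ktan: "p2 * p \<le> p1^2 - 1"
  defines "m \<equiv> n - 1"
  defines "A \<equiv> real m/2 * p1 * p^(m-1)"
    and "A' \<equiv> (real m/2)*(p2 * p^(m-1) + (real m - 1)*p1^2*p^(m-2))"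
    and "B \<equiv> p^m/(2*r)"
    and "B' \<equiv> real m * p1 * p^(m-1)/(2*r) - p^m/(2*r^2)"
  shows "(c + (real n - 1) * p1 / p * b)^2 * (p/r)^(n-1) \<ge>
      ((real n - 1)/2)^4 * (a^2 * (p/r)^(n-1))
    + (real n - 1)^2/16 * (a^2/r^2 * (p/r)^(n-1))
    + (real n - 1)^3*(real n - 3)/16 * (a^2/p^2*(p/r)^(n-1))
    + 1/4*(b^2/r^2*(p/r)^(n-1))
    + ((real n)^2-1)/4*(b^2/p^2*(p/r)^(n-1))
    + ((A' + B') * b^2 + 2 * (A + B) * b * c
        - real m^2 / 4 * ((A' - B') * a^2 + 2 * (A - B) * a * b)) / r^(n-1)" (is "?L \<ge> ?R")
proof -
  define mm where "mm = real m"
  define w where "w = p^m"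
  define ip where "ip = inverse p"
  define ir where "ir = inverse r"
  have mm: "real n - 1 = mm" "real n - 3 = mm - 2" "real n = mm + 1"
    unfolding mm_def m_def using n by auto
  have mm2: "mm \<ge> 2" unfolding mm_def m_def using n by auto
  have w: "w > 0" unfolding w_def using p by simp
  have pm1: "p^(m-1) = w * ip" unfolding w_def ip_def m_def using p n
    by (simp add: power_diff field_simps)
  have pm2: "p^(m-2) = w * ip^2" unfolding w_def ip_def m_def using p n
    by (simp add: power_diff field_simps power2_eq_square)
  have prm: "(p/r)^(n-1) = w * ir^m"
    unfolding w_def ir_def m_def power_divide by (simp add: divide_inverse power_inverse)
  have div: "x / r^(n-1) = x * ir^m" "x / p = x * ip" "x / p^2 = x * ip^2" "x / r^2 = x * ir^2"
    "x / (2*r) = x * ir / 2" "x / (2*r^2) = x * ir^2 / 2" for x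
    unfolding ir_def ip_def m_def using r p by (simp_all add: field_simps power_inverse)
  let ?S = "(c+((mm/2)*p1*ip - ir/2)*b)^2 + (mm^2/4)*(b+((mm/2)*p1*ip - ir/2)*a)^2
             + mm*b^2*((p1^2 - 1)*ip^2 - p2*ip)
             + b^2*((mm/2)*(p2*ip - 1) + mm*(mm-2)/4*((p1^2 - 1)*ip^2 - 1))
             + (mm^2/4)*a^2*((mm/2)*(p2*ip - 1) + mm*(mm-2)/4*((p1^2 - 1)*ip^2 - 1))"
  have eq: "?L - ?R = w * ?S * ir^m"
    unfolding completed_square_identity[symmetric]
    unfolding A_def A'_def B_def B'_def div prm pm1 pm2 mm mm_def[symmetric] w_def[symmetric]
    by (simp add: field_simps)
  have "?S \<ge> 0"
    using curvature_remainders_nonneg[OF p Krad Ktan] mm2 unfolding ip_def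
    by (intro add_nonneg_nonneg mult_nonneg_nonneg divide_nonneg_nonneg) auto
  then have "w * ?S * ir^m \<ge> 0"
    using w r unfolding ir_def by simp
  then have "0 \<le> ?L - ?R" unfolding eq .
  then show ?thesis by (rule diff_ge_0_iff_ge[THEN iffD1])
qed

text \<open>\<open>flux_A = (\<psi>\<^sup>m)'/2\<close> and \<open>flux_B = \<psi>\<^sup>m/(2r)\<close>, the primed versions are their derivatives, and
  \<open>radial_flux\<close> is the \<open>\<alpha> u\<^sub>r\<^sup>2 + \<beta> u\<^sup>2\<close> of the proof idea.\<close>

definition flux_A :: "nat \<Rightarrow> (nat \<Rightarrow> real \<Rightarrow> real) \<Rightarrow> real \<Rightarrow> real" where
  "flux_A m dpsi r = real m / 2 * dpsi 1 r * dpsi 0 r ^ (m - 1)"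

definition flux_A' :: "nat \<Rightarrow> (nat \<Rightarrow> real \<Rightarrow> real) \<Rightarrow> real \<Rightarrow> real" where
  "flux_A' m dpsi r = real m / 2 * (dpsi 2 r * dpsi 0 r ^ (m - 1)
                        + (real m - 1) * (dpsi 1 r)^2 * dpsi 0 r ^ (m - 2))"

definition flux_B :: "nat \<Rightarrow> (nat \<Rightarrow> real \<Rightarrow> real) \<Rightarrow> real \<Rightarrow> real" where
  "flux_B m dpsi r = dpsi 0 r ^ m / (2 * r)"

definition flux_B' :: "nat \<Rightarrow> (nat \<Rightarrow> real \<Rightarrow> real) \<Rightarrow> real \<Rightarrow> real" where
  "flux_B' m dpsi r = real m * dpsi 1 r * dpsi 0 r ^ (m - 1) / (2 * r) - dpsi 0 r ^ m / (2 * r^2)"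

definition radial_flux :: "nat \<Rightarrow> (nat \<Rightarrow> real \<Rightarrow> real) \<Rightarrow> (real^'n \<Rightarrow> real) \<Rightarrow> real^'n \<Rightarrow> real" where
  "radial_flux m dpsi u y =
     (flux_A m dpsi (norm y) + flux_B m dpsi (norm y)) * (rad_d1 u y)^2
     - real m^2 / 4 * (flux_A m dpsi (norm y) - flux_B m dpsi (norm y)) * (u y)^2"

definition radial_flux_deriv :: "nat \<Rightarrow> (nat \<Rightarrow> real \<Rightarrow> real) \<Rightarrow> (real^'n \<Rightarrow> real) \<Rightarrow> real^'n \<Rightarrow> real" where
  "radial_flux_deriv m dpsi u y =
     (flux_A' m dpsi (norm y) + flux_B' m dpsi (norm y)) * (rad_d1 u y)^2
     + 2 * (flux_A m dpsi (norm y) + flux_B m dpsi (norm y)) * rad_d1 u y * rad_d2 u y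
     - real m^2 / 4 * ((flux_A' m dpsi (norm y) - flux_B' m dpsi (norm y)) * (u y)^2
        + 2 * (flux_A m dpsi (norm y) - flux_B m dpsi (norm y)) * u y * rad_d1 u y)"

definition volume_density :: "(nat \<Rightarrow> real \<Rightarrow> real) \<Rightarrow> real^'n \<Rightarrow> real" where
  "volume_density dpsi y = (dpsi 0 (norm y) / norm y) ^ (CARD('n) - 1)"

lemma int_g_eq_volume_density: "int_g dpsi F = (\<integral>y. F y * volume_density dpsi y \<partial>lborel)"
  unfolding int_g_def volume_density_def ..

lemma flux_coefficients_power_bounded:
  fixes dpsi :: "nat \<Rightarrow> real \<Rightarrow> real"
  assumes m: "m \<ge> 2" and R: "R \<ge> 0"
    and p0: "power_bounded R 1 (\<lambda>y::'a::real_normed_vector. dpsi 0 (norm y))"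
    and p1: "power_bounded R 0 (\<lambda>y::'a. dpsi 1 (norm y))"
    and p2: "power_bounded R 0 (\<lambda>y::'a. dpsi 2 (norm y))"
  shows "power_bounded R (m - 1) (\<lambda>y::'a. flux_A m dpsi (norm y))"
    and "power_bounded R (m - 1) (\<lambda>y::'a. flux_B m dpsi (norm y))"
    and "power_bounded R (m - 2) (\<lambda>y::'a. flux_A' m dpsi (norm y))"
    and "power_bounded R (m - 2) (\<lambda>y::'a. flux_B' m dpsi (norm y))"
proof -
  have pow: "power_bounded R j (\<lambda>y::'a. dpsi 0 (norm y) ^ j)" for j
    using power_bounded_power[OF p0, of j] by simp
  show "power_bounded R (m - 1) (\<lambda>y::'a. flux_A m dpsi (norm y))"
    using power_bounded_cmult[OF power_bounded_mult[OF p1 pow[of "m - 1"]], of "real m / 2"]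
    by (simp add: flux_A_def mult.assoc)
  have "power_bounded R (Suc (m - 1)) (\<lambda>y::'a. dpsi 0 (norm y) ^ m)"
    by (rule power_bounded_mono[OF pow _ R]) (use m in simp)
  from power_bounded_cmult[OF power_bounded_divide_norm[OF this], of "1/2"]
  show "power_bounded R (m - 1) (\<lambda>y::'a. flux_B m dpsi (norm y))"
    by (rule power_bounded_cong) (simp add: flux_B_def)
  have t1: "power_bounded R (m - 2) (\<lambda>y::'a. dpsi 2 (norm y) * dpsi 0 (norm y) ^ (m - 1))"
    by (rule power_bounded_mono[OF power_bounded_mult[OF p2 pow] _ R]) simp
  have t2: "power_bounded R (m - 2) (\<lambda>y::'a. (dpsi 1 (norm y))^2 * dpsi 0 (norm y) ^ (m - 2))"
    using power_bounded_mult[OF power_bounded_power[OF p1, of 2] pow[of "m - 2"]] by simp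
  have "power_bounded R (m - 2) (\<lambda>y::'a. real m / 2 * (dpsi 2 (norm y) * dpsi 0 (norm y) ^ (m - 1)
          + (real m - 1) * ((dpsi 1 (norm y))^2 * dpsi 0 (norm y) ^ (m - 2))))"
    by (intro power_bounded_cmult power_bounded_add t1 t2)
  then show "power_bounded R (m - 2) (\<lambda>y::'a. flux_A' m dpsi (norm y))"
    by (rule power_bounded_cong) (simp add: flux_A'_def mult.assoc)
  have t3: "power_bounded R (Suc (m - 2)) (\<lambda>y::'a. dpsi 1 (norm y) * dpsi 0 (norm y) ^ (m - 1))"
    by (rule power_bounded_mono[OF power_bounded_mult[OF p1 pow] _ R]) (use m in simp)
  have t4: "power_bounded R (Suc (Suc (m - 2))) (\<lambda>y::'a. dpsi 0 (norm y) ^ m)"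
    by (rule power_bounded_mono[OF pow _ R]) (use m in simp)
  have "power_bounded R (m - 2) (\<lambda>y::'a.
      real m / 2 * (dpsi 1 (norm y) * dpsi 0 (norm y) ^ (m - 1) / norm y)
      - 1/2 * (dpsi 0 (norm y) ^ m / norm y / norm y))"
    by (intro power_bounded_diff power_bounded_cmult power_bounded_divide_norm t3 t4)
  then show "power_bounded R (m - 2) (\<lambda>y::'a. flux_B' m dpsi (norm y))"
    by (rule power_bounded_cong) (simp add: flux_B'_def power2_eq_square field_simps)
qed

context warping_function
begin

lemma flux_A_has_derivative:
  assumes r: "r > 0" and m: "m \<ge> 2"
  shows "(flux_A m dpsi has_real_derivative flux_A' m dpsi r) (at r)"
proof -
  obtain f0 f1 f2 where f: "f0 = dpsi 0" "f1 = dpsi 1" "f2 = dpsi 2" by blast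
  have d0: "(f0 has_real_derivative f1 r) (at r)"
    unfolding f by (rule psi_has_derivative[OF r, of 0, unfolded One_nat_def[symmetric]])
  have d1: "(f1 has_real_derivative f2 r) (at r)"
    unfolding f by (rule psi_has_derivative[OF r, of 1, unfolded Suc_1])
  have "((\<lambda>s. real m/2 * f1 s * f0 s^(m-1)) has_real_derivative
          real m/2 * f2 r * f0 r^(m-1) + real m/2 * f1 r * (real (m-1) * f0 r^(m-1-1) * f1 r)) (at r)"
    by (auto intro!: derivative_eq_intros d0 d1)
  moreover have "m - 1 - 1 = m - 2" "real (m - 1) = real m - 1" using m by auto
  ultimately show ?thesis
    unfolding flux_A_def[abs_def] flux_A'_def f by (simp add: algebra_simps power2_eq_square)
qed

lemma flux_B_has_derivative:
  assumes r: "r > 0" and m: "m \<ge> 1"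
  shows "(flux_B m dpsi has_real_derivative flux_B' m dpsi r) (at r)"
proof -
  obtain f0 f1 where f: "f0 = dpsi 0" "f1 = dpsi 1" by blast
  have d0: "(f0 has_real_derivative f1 r) (at r)"
    unfolding f by (rule psi_has_derivative[OF r, of 0, unfolded One_nat_def[symmetric]])
  have "((\<lambda>s. f0 s ^ m / (2 * s)) has_real_derivative
          (real m * f0 r ^ (m - 1) * f1 r * (2 * r) - f0 r ^ m * (2 * 1)) / (2 * r)^2) (at r)"
    using r by (auto intro!: derivative_eq_intros d0 simp: power2_eq_square mult_ac)
  then show ?thesis
    unfolding flux_B_def[abs_def] flux_B'_def f
    by (rule DERIV_cong) (use r in \<open>simp add: field_simps power2_eq_square\<close>)
qed

end

section \<open>Integrating the pointwise inequality\<close>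

locale rellich_setting = warping_function dpsi + test_function u
  for dpsi :: "nat \<Rightarrow> real \<Rightarrow> real" and u :: "real^'n \<Rightarrow> real" +
  assumes dim: "CARD('n) \<ge> 3"
begin

lemma borel_measurable_radial_flux [measurable]:
  "radial_flux m dpsi u \<in> borel_measurable borel"
  "radial_flux_deriv m dpsi u \<in> borel_measurable borel"
  unfolding radial_flux_def[abs_def] radial_flux_deriv_def[abs_def]
    flux_A_def flux_A'_def flux_B_def flux_B'_def
  by measurable

lemma borel_measurable_volume_density [measurable]:
  "(volume_density dpsi :: real^'n \<Rightarrow> real) \<in> borel_measurable borel"
  unfolding volume_density_def[abs_def] by measurable

lemma borel_measurable_rad_lap [measurable]: "rad_lap dpsi u \<in> borel_measurable borel"
  unfolding rad_lap_def[abs_def] by measurable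

lemma radial_flux_has_ray_derivative:
  assumes m: "m \<ge> 2" and y: "y \<noteq> 0" and t: "t > 0"
  shows "((\<lambda>s. radial_flux m dpsi u (s *\<^sub>R sgn y)) has_real_derivative
           radial_flux_deriv m dpsi u (t *\<^sub>R sgn y)) (at t)"
proof -
  define e where "e = sgn y"
  have e: "norm e = 1" unfolding e_def using y by (simp add: norm_sgn)
  define \<alpha> where "\<alpha> s = flux_A m dpsi s + flux_B m dpsi s" for s
  define \<beta> where "\<beta> s = flux_A m dpsi s - flux_B m dpsi s" for s
  define \<phi> where "\<phi> s = \<alpha> s * (ray_d1 e s)^2 - real m^2 / 4 * (\<beta> s * (u (s *\<^sub>R e))^2)" for s
  have A: "(flux_A m dpsi has_real_derivative flux_A' m dpsi t) (at t)"
    by (rule flux_A_has_derivative[OF t m])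
  have B: "(flux_B m dpsi has_real_derivative flux_B' m dpsi t) (at t)"
    using m by (intro flux_B_has_derivative t) simp
  have d1: "((\<lambda>s. (ray_d1 e s)^2) has_real_derivative 2 * ray_d1 e t * ray_d2 e t) (at t)"
    using DERIV_mult[OF ray_d1_has_derivative[of e t] ray_d1_has_derivative[of e t]] by (simp add: power2_eq_square mult_ac)
  have d0: "((\<lambda>s. (u (s *\<^sub>R e))^2) has_real_derivative 2 * u (t *\<^sub>R e) * ray_d1 e t) (at t)"
    using DERIV_mult[OF ray_has_derivative[of e t] ray_has_derivative[of e t]] by (simp add: power2_eq_square mult_ac)
  have "(\<phi> has_real_derivative radial_flux_deriv m dpsi u (t *\<^sub>R e)) (at t)"
    unfolding \<phi>_def[abs_def] \<alpha>_def \<beta>_def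
    by (rule DERIV_cong[OF DERIV_diff[OF DERIV_mult[OF DERIV_add[OF A B] d1]
          DERIV_cmult[OF DERIV_mult[OF DERIV_diff[OF A B] d0]]]])
      (use t e in \<open>simp add: radial_flux_deriv_def rad_d1_scaleR rad_d2_scaleR algebra_simps\<close>)
  moreover have "t \<in> {0<..}" using t by simp
  moreover have "\<phi> s = radial_flux m dpsi u (s *\<^sub>R e)" if "s \<in> {0<..}" for s
    using that e
    by (simp add: \<phi>_def \<alpha>_def \<beta>_def radial_flux_def rad_d1_scaleR field_simps)
  ultimately show ?thesis
    unfolding e_def by (rule has_field_derivative_transform_within_open[OF _ open_greaterThan])
qed

lemma local_power_bounds:
  obtains R where "R > 0"
    "\<And>y. norm y > R \<Longrightarrow> u y = 0 \<and> rad_d1 u y = 0 \<and> rad_d2 u y = 0"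
    "power_bounded R 0 u" "power_bounded R 0 (rad_d1 u)" "power_bounded R 0 (rad_d2 u)"
    "power_bounded R 1 (\<lambda>y::real^'n. dpsi 0 (norm y))"
    "power_bounded R 0 (\<lambda>y::real^'n. dpsi 1 (norm y))"
    "power_bounded R 0 (\<lambda>y::real^'n. dpsi 2 (norm y))"
    "power_bounded R 0 (\<lambda>y::real^'n. norm y / dpsi 0 (norm y))"
    "power_bounded R 0 (volume_density dpsi :: real^'n \<Rightarrow> real)"
proof -
  obtain R B where R: "R > 0" and B: "B \<ge> 0"
    and supp: "\<And>y. norm y > R \<Longrightarrow> u y = 0 \<and> rad_d1 u y = 0 \<and> rad_d2 u y = 0"
    and bnd: "\<And>y. \<bar>u y\<bar> \<le> B \<and> \<bar>rad_d1 u y\<bar> \<le> B \<and> \<bar>rad_d2 u y\<bar> \<le> B"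
    using radial_derivatives_bounded by blast
  obtain M where M: "M \<ge> 1"
    and Mb: "\<And>t. 0 \<le> t \<Longrightarrow> t \<le> R \<Longrightarrow> \<bar>dpsi 1 t\<bar> \<le> M \<and> \<bar>dpsi 2 t\<bar> \<le> M \<and> dpsi 0 t \<le> M * t"
    using psi_local_bounds[OF R] by blast
  have psi: "0 \<le> dpsi 0 (norm y)" "norm y \<le> dpsi 0 (norm y)" for y :: "real^'n"
    using psi_ge[of "norm y"] norm_ge_zero[of y] by linarith+
  show ?thesis
  proof (rule that[OF R supp])
    show "power_bounded R 0 u"
      by (rule power_bounded_const_bound[of B]) (use B bnd in auto)
    show "power_bounded R 0 (rad_d1 u)"
      by (rule power_bounded_const_bound[of B]) (use B bnd in auto)
    show "power_bounded R 0 (rad_d2 u)"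
      by (rule power_bounded_const_bound[of B]) (use B bnd in auto)
    show "power_bounded R 1 (\<lambda>y::real^'n. dpsi 0 (norm y))"
      by (rule power_boundedI[of M]) (use M Mb psi in auto)
    show "power_bounded R 0 (\<lambda>y::real^'n. dpsi 1 (norm y))"
      by (rule power_bounded_const_bound[of M]) (use M Mb in auto)
    show "power_bounded R 0 (\<lambda>y::real^'n. dpsi 2 (norm y))"
      by (rule power_bounded_const_bound[of M]) (use M Mb in auto)
    show "power_bounded R 0 (\<lambda>y::real^'n. norm y / dpsi 0 (norm y))"
    proof (rule power_bounded_const_bound[of 1])
      fix y :: "real^'n" assume "y \<noteq> 0"
      then show "\<bar>norm y / dpsi 0 (norm y)\<bar> \<le> 1"
        using psi[of y] psi_pos[of "norm y"] by (simp add: divide_le_eq)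
    qed simp
    show "power_bounded R 0 (volume_density dpsi :: real^'n \<Rightarrow> real)"
    proof (rule power_bounded_const_bound[of "M ^ (CARD('n) - 1)"])
      fix y :: "real^'n" assume y: "y \<noteq> 0" "norm y \<le> R"
      have "dpsi 0 (norm y) / norm y \<le> M"
        using Mb[of "norm y"] y by (simp add: divide_le_eq)
      then show "\<bar>volume_density dpsi y\<bar> \<le> M ^ (CARD('n) - 1)"
        using psi[of y] unfolding volume_density_def by (simp add: power_mono)
    qed (use M in simp)
  qed
qed

lemma radial_flux_bounds:
  assumes m: "m \<ge> 2"
  obtains R C where "R > 0" "C \<ge> 0"
    "\<And>y. norm y > R \<Longrightarrow> radial_flux m dpsi u y = 0 \<and> radial_flux_deriv m dpsi u y = 0"
    "\<And>y. y \<noteq> 0 \<Longrightarrow> \<bar>radial_flux m dpsi u y\<bar> \<le> C * norm y ^ (m - 1)"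
    "\<And>y. y \<noteq> 0 \<Longrightarrow> \<bar>radial_flux_deriv m dpsi u y\<bar> \<le> C * norm y ^ (m - 2)"
proof -
  obtain R where R: "R > 0" and supp: "\<And>y. norm y > R \<Longrightarrow> u y = 0 \<and> rad_d1 u y = 0 \<and> rad_d2 u y = 0"
    and a: "power_bounded R 0 u" and b: "power_bounded R 0 (rad_d1 u)" and c: "power_bounded R 0 (rad_d2 u)"
    and p0: "power_bounded R 1 (\<lambda>y::real^'n. dpsi 0 (norm y))"
    and p1: "power_bounded R 0 (\<lambda>y::real^'n. dpsi 1 (norm y))"
    and p2: "power_bounded R 0 (\<lambda>y::real^'n. dpsi 2 (norm y))"
    and "power_bounded R 0 (\<lambda>y::real^'n. norm y / dpsi 0 (norm y))"
      "power_bounded R 0 (volume_density dpsi :: real^'n \<Rightarrow> real)"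
    using local_power_bounds by blast
  note coeff = flux_coefficients_power_bounded[OF m less_imp_le[OF R] p0 p1 p2]
  have a2: "power_bounded R 0 (\<lambda>y. (u y)^2)" and b2: "power_bounded R 0 (\<lambda>y. (rad_d1 u y)^2)"
    using power_bounded_power[OF a, of 2] power_bounded_power[OF b, of 2] by simp_all
  have low: "power_bounded R (m - 2) f" if "power_bounded R (m - 1) f" for f :: "real^'n \<Rightarrow> real"
    using power_bounded_mono[OF that _ less_imp_le[OF R]] by simp
  have flux0: "radial_flux m dpsi u y = 0" "radial_flux_deriv m dpsi u y = 0" if "norm y > R" for y
    using supp[OF that] by (simp_all add: radial_flux_def radial_flux_deriv_def)
  note \<alpha> = power_bounded_add[OF coeff(1,2)] and \<beta> = power_bounded_diff[OF coeff(1,2)]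
    and \<alpha>' = power_bounded_add[OF coeff(3,4)] and \<beta>' = power_bounded_diff[OF coeff(3,4)]
  have "power_bounded R (m - 1) (radial_flux m dpsi u)"
    unfolding radial_flux_def[abs_def]
    by (rule power_bounded_diff[OF power_bounded_mult_bounded[OF \<alpha> b2]
          power_bounded_mult_bounded[OF power_bounded_cmult[OF \<beta>] a2]])
  from power_bounded_imp_global_bound[OF this flux0(1)]
  obtain CG where CG: "CG \<ge> 0" "\<And>y. y \<noteq> 0 \<Longrightarrow> \<bar>radial_flux m dpsi u y\<bar> \<le> CG * norm y ^ (m - 1)"
    by blast
  have \<alpha>bc: "power_bounded R (m - 2) (\<lambda>y. 2 * (flux_A m dpsi (norm y) + flux_B m dpsi (norm y))
      * rad_d1 u y * rad_d2 u y)"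
    by (intro power_bounded_mult_bounded[OF _ c] power_bounded_mult_bounded[OF _ b]
        power_bounded_cmult low \<alpha>)
  have \<beta>ab: "power_bounded R (m - 2) (\<lambda>y. 2 * (flux_A m dpsi (norm y) - flux_B m dpsi (norm y))
      * u y * rad_d1 u y)"
    by (intro power_bounded_mult_bounded[OF _ b] power_bounded_mult_bounded[OF _ a]
        power_bounded_cmult low \<beta>)
  have "power_bounded R (m - 2) (radial_flux_deriv m dpsi u)"
    unfolding radial_flux_deriv_def[abs_def]
    by (intro power_bounded_diff power_bounded_add power_bounded_cmult \<alpha>bc \<beta>ab
        power_bounded_mult_bounded[OF \<alpha>' b2] power_bounded_mult_bounded[OF \<beta>' a2])
  from power_bounded_imp_global_bound[OF this flux0(2)]
  obtain CD where CD: "CD \<ge> 0" "\<And>y. y \<noteq> 0 \<Longrightarrow> \<bar>radial_flux_deriv m dpsi u y\<bar> \<le> CD * norm y ^ (m - 2)"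
    by blast
  show ?thesis
  proof (rule that[OF R, of "max CG CD"])
    show "\<bar>radial_flux m dpsi u y\<bar> \<le> max CG CD * norm y ^ (m - 1)" if "y \<noteq> 0" for y
      by (rule order_trans[OF CG(2)[OF that] mult_right_mono]) simp_all
    show "\<bar>radial_flux_deriv m dpsi u y\<bar> \<le> max CG CD * norm y ^ (m - 2)" if "y \<noteq> 0" for y
      by (rule order_trans[OF CD(2)[OF that] mult_right_mono]) simp_all
  qed (use CG flux0 in auto)
qed

lemma integral_radial_flux_deriv:
  shows "integrable lborel (\<lambda>y. radial_flux_deriv (CARD('n) - 1) dpsi u y / norm y ^ (CARD('n) - 1))"
    and "(\<integral>y. radial_flux_deriv (CARD('n) - 1) dpsi u y / norm y ^ (CARD('n) - 1) \<partial>lborel) = 0"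
proof -
  define m where "m = CARD('n) - 1"
  have m: "m \<ge> 2" using dim unfolding m_def by simp
  obtain R C where R: "R > 0" and C: "C \<ge> 0"
    and supp: "\<And>y. norm y > R \<Longrightarrow> radial_flux m dpsi u y = 0 \<and> radial_flux_deriv m dpsi u y = 0"
    and G: "\<And>y. y \<noteq> 0 \<Longrightarrow> \<bar>radial_flux m dpsi u y\<bar> \<le> C * norm y ^ (m - 1)"
    and D: "\<And>y. y \<noteq> 0 \<Longrightarrow> \<bar>radial_flux_deriv m dpsi u y\<bar> \<le> C * norm y ^ (m - 2)"
    using radial_flux_bounds[OF m] by blast
  have Gb: "\<bar>radial_flux m dpsi u y\<bar> \<le> C * norm y ^ (DIM(real^'n) - 2)" if "y \<noteq> 0" for y
    using G[OF that] by (simp add: m_def numeral_2_eq_2)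
  have Db: "\<bar>radial_flux_deriv m dpsi u y\<bar> \<le> C * norm y ^ (DIM(real^'n) - 3)" if "y \<noteq> 0" for y
    using D[OF that] by (simp add: m_def numeral_2_eq_2 numeral_3_eq_3)
  note radial = integral_radial_derivative_eq_zero[OF _ R C borel_measurable_radial_flux
      radial_flux_has_ray_derivative[OF m] Gb Db supp]
  show "integrable lborel (\<lambda>y. radial_flux_deriv (CARD('n) - 1) dpsi u y / norm y ^ (CARD('n) - 1))"
    and "(\<integral>y. radial_flux_deriv (CARD('n) - 1) dpsi u y / norm y ^ (CARD('n) - 1) \<partial>lborel) = 0"
    using radial dim unfolding m_def by simp_all
qed

lemma integrable_integrands:
  shows "integrable lborel (\<lambda>y. (rad_lap dpsi u y)^2 * volume_density dpsi y)"
    and "integrable lborel (\<lambda>y. (u y)^2 * volume_density dpsi y)"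
    and "integrable lborel (\<lambda>y. (u y)^2 / (norm y)^2 * volume_density dpsi y)"
    and "integrable lborel (\<lambda>y. (u y)^2 / (dpsi 0 (norm y))^2 * volume_density dpsi y)"
    and "integrable lborel (\<lambda>y. (rad_d1 u y)^2 / (norm y)^2 * volume_density dpsi y)"
    and "integrable lborel (\<lambda>y. (rad_d1 u y)^2 / (dpsi 0 (norm y))^2 * volume_density dpsi y)"
proof -
  obtain R where R: "R > 0" and supp: "\<And>y. norm y > R \<Longrightarrow> u y = 0 \<and> rad_d1 u y = 0 \<and> rad_d2 u y = 0"
    and a: "power_bounded R 0 u" and b: "power_bounded R 0 (rad_d1 u)" and c: "power_bounded R 0 (rad_d2 u)"
    and "power_bounded R 1 (\<lambda>y::real^'n. dpsi 0 (norm y))"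
    and p1: "power_bounded R 0 (\<lambda>y::real^'n. dpsi 1 (norm y))"
    and "power_bounded R 0 (\<lambda>y::real^'n. dpsi 2 (norm y))"
    and q: "power_bounded R 0 (\<lambda>y::real^'n. norm y / dpsi 0 (norm y))"
    and W: "power_bounded R 0 (volume_density dpsi :: real^'n \<Rightarrow> real)"
    using local_power_bounds by blast
  have R0: "R \<ge> 0" using R by simp
  have int: "integrable lborel (\<lambda>y. (f y)^2 * volume_density dpsi y)"
    if "power_bounded R 0 (\<lambda>y. norm y * f y)" "f \<in> borel_measurable borel"
      "\<And>y. norm y > R \<Longrightarrow> f y = 0"
    for f :: "real^'n \<Rightarrow> real"
    using integrable_square_weighted[OF _ R that(2) _ that(1) W that(3)] dim by simp
  have norm_times: "power_bounded R 0 (\<lambda>y. norm y * f y)" if "power_bounded R 0 f" for f :: "real^'n \<Rightarrow> real"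
    using power_bounded_mono[OF power_bounded_mult[OF power_bounded_norm that] _ R0] by simp
  have div_psi: "power_bounded R 0 (\<lambda>y. norm y * (f y / dpsi 0 (norm y)))"
    if "power_bounded R 0 f" for f :: "real^'n \<Rightarrow> real"
    using power_bounded_mult_bounded[OF q that] by (rule power_bounded_cong) simp
  have div_norm: "power_bounded R 0 (\<lambda>y. norm y * (f y / norm y))"
    if "power_bounded R 0 f" for f :: "real^'n \<Rightarrow> real"
    using that by (rule power_bounded_cong) simp
  have "power_bounded R 0 (\<lambda>y. norm y * rad_d2 u y
          + (real CARD('n) - 1) * (dpsi 1 (norm y) * (norm y / dpsi 0 (norm y)) * rad_d1 u y))"
    by (intro power_bounded_add norm_times power_bounded_cmult power_bounded_mult_bounded p1 q b c)
  then have "power_bounded R 0 (\<lambda>y. norm y * rad_lap dpsi u y)"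
  proof (rule power_bounded_cong)
    fix y :: "real^'n" assume "y \<noteq> 0" "norm y \<le> R"
    then show "norm y * rad_lap dpsi u y = norm y * rad_d2 u y
        + (real CARD('n) - 1) * (dpsi 1 (norm y) * (norm y / dpsi 0 (norm y)) * rad_d1 u y)"
      using psi_pos[of "norm y"] unfolding rad_lap_def by (simp add: field_simps)
  qed
  then show "integrable lborel (\<lambda>y. (rad_lap dpsi u y)^2 * volume_density dpsi y)"
    by (rule int) (measurable, simp add: supp rad_lap_def)
  show "integrable lborel (\<lambda>y. (u y)^2 * volume_density dpsi y)"
    by (rule int[OF norm_times[OF a]], measurable) (simp add: supp)
  have "integrable lborel (\<lambda>y. (u y / norm y)^2 * volume_density dpsi y)"
    by (rule int[OF div_norm[OF a]], measurable) (simp add: supp)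
  then show "integrable lborel (\<lambda>y. (u y)^2 / (norm y)^2 * volume_density dpsi y)"
    by (simp add: power_divide)
  have "integrable lborel (\<lambda>y. (u y / dpsi 0 (norm y))^2 * volume_density dpsi y)"
    by (rule int[OF div_psi[OF a]], measurable) (simp add: supp)
  then show "integrable lborel (\<lambda>y. (u y)^2 / (dpsi 0 (norm y))^2 * volume_density dpsi y)"
    by (simp add: power_divide)
  have "integrable lborel (\<lambda>y. (rad_d1 u y / norm y)^2 * volume_density dpsi y)"
    by (rule int[OF div_norm[OF b]], measurable) (simp add: supp)
  then show "integrable lborel (\<lambda>y. (rad_d1 u y)^2 / (norm y)^2 * volume_density dpsi y)"
    by (simp add: power_divide)
  have "integrable lborel (\<lambda>y. (rad_d1 u y / dpsi 0 (norm y))^2 * volume_density dpsi y)"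
    by (rule int[OF div_psi[OF b]], measurable) (simp add: supp)
  then show "integrable lborel (\<lambda>y. (rad_d1 u y)^2 / (dpsi 0 (norm y))^2 * volume_density dpsi y)"
    by (simp add: power_divide)
qed

lemma pointwise_inequality:
  "((real CARD('n) - 1) / 2) ^ 4 * ((u y)^2 * volume_density dpsi y)
   + (real CARD('n) - 1)^2 / 16 * ((u y)^2 / (norm y)^2 * volume_density dpsi y)
   + (real CARD('n) - 1) ^ 3 * (real CARD('n) - 3) / 16
       * ((u y)^2 / (dpsi 0 (norm y))^2 * volume_density dpsi y)
   + 1 / 4 * ((rad_d1 u y)^2 / (norm y)^2 * volume_density dpsi y)
   + ((real CARD('n))^2 - 1) / 4 * ((rad_d1 u y)^2 / (dpsi 0 (norm y))^2 * volume_density dpsi y)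
   + radial_flux_deriv (CARD('n) - 1) dpsi u y / norm y ^ (CARD('n) - 1)
   \<le> (rad_lap dpsi u y)^2 * volume_density dpsi y"
proof (cases "y = 0")
  case True
  then show ?thesis using dim by (simp add: volume_density_def zero_power)
next
  case False
  then have r: "norm y > 0" by simp
  show ?thesis
    using completed_square_inequality[where a="u y" and b="rad_d1 u y" and c="rad_d2 u y",
        OF r psi_pos[OF r] dim psi2_ge_psi[OF r] psi2_mult_psi_le[OF r]]
    unfolding volume_density_def rad_lap_def radial_flux_deriv_def
      flux_A_def flux_A'_def flux_B_def flux_B'_def .
qed


lemma integrated_inequality:
  "((real CARD('n) - 1) / 2) ^ 4 * int_g dpsi (\<lambda>x. (u x)\<^sup>2)
   + (real CARD('n) - 1)\<^sup>2 / 16 * int_g dpsi (\<lambda>x. (u x)\<^sup>2 / (norm x)\<^sup>2)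
   + (real CARD('n) - 1) ^ 3 * (real CARD('n) - 3) / 16
       * int_g dpsi (\<lambda>x. (u x)\<^sup>2 / (dpsi 0 (norm x))\<^sup>2)
   + 1 / 4 * int_g dpsi (\<lambda>x. (rad_d1 u x)\<^sup>2 / (norm x)\<^sup>2)
   + ((real CARD('n))\<^sup>2 - 1) / 4 * int_g dpsi (\<lambda>x. (rad_d1 u x)\<^sup>2 / (dpsi 0 (norm x))\<^sup>2)
   + (\<integral>y. radial_flux_deriv (CARD('n) - 1) dpsi u y / norm y ^ (CARD('n) - 1) \<partial>lborel)
   \<le> int_g dpsi (\<lambda>x. (rad_lap dpsi u x)\<^sup>2)"
  (is "?value \<le> _")
proof -
  note integrable = integrable_integrands integral_radial_flux_deriv(1)
  let ?lower = "\<lambda>y. ((real CARD('n) - 1) / 2) ^ 4 * ((u y)^2 * volume_density dpsi y)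
   + (real CARD('n) - 1)^2 / 16 * ((u y)^2 / (norm y)^2 * volume_density dpsi y)
   + (real CARD('n) - 1) ^ 3 * (real CARD('n) - 3) / 16
       * ((u y)^2 / (dpsi 0 (norm y))^2 * volume_density dpsi y)
   + 1 / 4 * ((rad_d1 u y)^2 / (norm y)^2 * volume_density dpsi y)
   + ((real CARD('n))^2 - 1) / 4 * ((rad_d1 u y)^2 / (dpsi 0 (norm y))^2 * volume_density dpsi y)
   + radial_flux_deriv (CARD('n) - 1) dpsi u y / norm y ^ (CARD('n) - 1)"
  have "has_bochner_integral lborel ?lower ?value"
    unfolding int_g_eq_volume_density
    by (intro has_bochner_integral_add has_bochner_integral_mult_right
        has_bochner_integral_integrable integrable)
  then have eq: "integral\<^sup>L lborel ?lower = ?value"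
    by (rule has_bochner_integral_integral_eq)
  have "integral\<^sup>L lborel ?lower \<le> int_g dpsi (\<lambda>x. (rad_lap dpsi u x)\<^sup>2)"
    unfolding int_g_eq_volume_density
    by (intro integral_mono pointwise_inequality integrable
        Bochner_Integration.integrable_add integrable_mult_right)
  then show ?thesis unfolding eq .
qed


end

theorem corollary5p1:
  fixes dpsi :: "nat \<Rightarrow> real \<Rightarrow> real"
    and u :: "real^'n \<Rightarrow> real"
  assumes N5: "CARD('n) \<ge> 5"
    and smooth: "smooth_halfline dpsi"
    and nonneg: "\<forall>r\<ge>0. dpsi 0 r \<ge> 0"
    and pos: "\<forall>r>0. dpsi 0 r > 0"
    and d1: "dpsi 1 0 = 1"
    and even: "\<forall>k. dpsi (2 * k) 0 = 0"
    and Krad: "\<forall>r>0. - dpsi 2 r / dpsi 0 r \<le> -1"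
    and Ktan: "\<forall>r>0. - dpsi 2 r / dpsi 0 r \<ge> - ((dpsi 1 r)\<^sup>2 - 1) / (dpsi 0 r)\<^sup>2"
    and u: "cinf_c u"
  shows "int_g dpsi (\<lambda>x. (rad_lap dpsi u x)\<^sup>2)
           - ((real CARD('n) - 1) / 2) ^ 4 * int_g dpsi (\<lambda>x. (u x)\<^sup>2)
         \<ge> (real CARD('n) - 1)\<^sup>2 / 16 * int_g dpsi (\<lambda>x. (u x)\<^sup>2 / (norm x)\<^sup>2)
           + (real CARD('n) - 1) ^ 3 * (real CARD('n) - 3) / 16
               * int_g dpsi (\<lambda>x. (u x)\<^sup>2 / (dpsi 0 (norm x))\<^sup>2)
           + 1 / 4 * int_g dpsi (\<lambda>x. (rad_d1 u x)\<^sup>2 / (norm x)\<^sup>2)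
           + ((real CARD('n))\<^sup>2 - 1) / 4
               * int_g dpsi (\<lambda>x. (rad_d1 u x)\<^sup>2 / (dpsi 0 (norm x))\<^sup>2)"
proof -
  interpret rellich_setting dpsi u
    using N5 smooth pos d1 even Krad Ktan u by unfold_locales auto
  have rearrange: "a + b + c + d + e + F \<le> L \<Longrightarrow> F = 0 \<Longrightarrow> L - a \<ge> b + c + d + e"
    for a b c d e F L :: real
    by linarith
  show ?thesis
    by (rule rearrange[OF integrated_inequality integral_radial_flux_deriv(2)])
qed

end
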